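(* Let $E,F$ be Polish spaces, $(P_x)_{x\in F}$ Markov kernels on $E$ with $(x,y)\mapsto P_x(y,A)$ measurable for each Borel $A$, and $X=(X_t)_{t\in\mathbb{Z}}$ an $F$-valued process on $(\Omega,\mathcal{A},\mathbb{P})$. Assume (A1) $X$ is stationary; (A2) there exist measurable $V:E\to(0,\infty)$ and measurable $\lambda,b:F\to\mathbb{R}_+$ with $\mathbb{E}\log^+\lambda(X_0)<\infty$, $\mathbb{E}\log^+b(X_0)<\infty$, $P_xV\le\lambda(x)V+b(x)$ for all $x\in F$, and $\limsup_n\big(\prod_{i=1}^n\lambda(X_{-i})\big)^{1/n}<1$ a.s.; (A3) there exists a measurable $\eta:(0,\infty)\times F\to(0,1)$ such that for each $R>0$ there is a probability kernel $\nu_R$ from $F$ to $E$ with $P_x(y,A)\ge\eta(R,x)\nu_R(x,A)$ for all $x\in F$, $y$ with $V(y)\le R$, and Borel $A$. For $t\in\mathbb{Z}$ let $\xi_t=(X_{t-j})_{j\ge0}\in F^{\mathbb{N}}$. For positive integers $C_1,C_2$ and $C=(C_1,C_2)$ define $$A_{1,C_1}=\Big\{x\in F^{\mathbb{N}}:\ \sup_{j\ge C_1}\prod_{i=1}^j\lambda(x_i)\le 1-\tfrac1{C_1},\ \ b(x_1)+\sum_{i\ge2}\prod_{k=1}^{i-1}\lambda(x_k)\,b(x_i)\le C_1\Big\},$$ $$A_{2,C}=\big\{x\in F^{\mathbb{N}}:\ \eta\big(2C_1(2C_1+1),x_0\big)\ge 1/(C_2+1)\big\},\qquad A_C=A_{1,C_1}\cap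 A_{2,C},$$ and $\rho_C=\mathbb{P}(\xi_0\in A_C\mid X^{-1}(\mathcal{I}))$. Then: 1. $\mathbb{P}\big(\xi_0\in\bigcup_{C_1\ge1}A_{1,C_1}\big)=1$. 2. There exists a pair $C=(C_1,C_2)$ of random variables with values in the positive integers such that for $\mathbb{P}$-almost all $\omega\in\Omega$, $$\lim_{n\to\infty}\frac1n\sum_{i=0}^n\mathbf{1}_{A_{C(\omega)}}(\xi_i(\omega))=\lim_{n\to\infty}\frac1n\sum_{i=1}^n\mathbf{1}_{A_{C(\omega)}}(\xi_{-i}(\omega))=\rho_{C(\omega)}(\omega)>0.$$
   Context: $\log^+(u)=\log(\max(u,1))$. $\mathcal{I}$ is the collection of measurable subsets $I$ of $F^{\mathbb{Z}}$ invariant under the shift $\theta$ (where $(\theta x)_t=x_{t+1}$), i.e. $\theta^{-1}I=I$, and $X^{-1}(\mathcal{I})=\{\{X\in I\}:I\in\mathcal{I}\}$. Coordinates of $x\in F^{\mathbb{N}}$ are $x=(x_0,x_1,\ldots)$, so $(\xi_t)_j=X_{t-j}$. *)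

theory Defs
  imports "HOL-Probability.Probability"
begin

definition logp :: "real \<Rightarrow> real" where
  "logp u = ln (max u 1)"

definition stationary :: "'a measure \<Rightarrow> (int \<Rightarrow> 'a \<Rightarrow> 'f::topological_space) \<Rightarrow> bool" where
  "stationary M X \<longleftrightarrow>
     (\<forall>J s. finite J \<longrightarrow>
        distr M (Pi\<^sub>M J (\<lambda>_. borel)) (\<lambda>\<omega>. \<lambda>j\<in>J. X (j + s) \<omega>)
      = distr M (Pi\<^sub>M J (\<lambda>_. borel)) (\<lambda>\<omega>. \<lambda>j\<in>J. X j \<omega>))"

definition shiftZ :: "(int \<Rightarrow> 'f) \<Rightarrow> (int \<Rightarrow> 'f)" where
  "shiftZ x = (\<lambda>t. x (t + 1))"

definition inv_sets :: "(int \<Rightarrow> 'f::topological_space) set set" where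
  "inv_sets = {I. I \<in> sets (Pi\<^sub>M UNIV (\<lambda>_::int. (borel :: 'f measure))) \<and> shiftZ -` I = I}"

definition inv_sigma :: "'a measure \<Rightarrow> (int \<Rightarrow> 'a \<Rightarrow> 'f::topological_space) \<Rightarrow> 'a measure" where
  "inv_sigma M X = sigma (space M) {{\<omega> \<in> space M. (\<lambda>t. X t \<omega>) \<in> I} | I. I \<in> inv_sets}"

definition xi :: "(int \<Rightarrow> 'a \<Rightarrow> 'f) \<Rightarrow> int \<Rightarrow> 'a \<Rightarrow> (nat \<Rightarrow> 'f)" where
  "xi X t \<omega> = (\<lambda>j. X (t - int j) \<omega>)"

text \<open>A_{1,C1}; the supremum condition is written as a bound on all terms, and the
  series of nonnegative terms is taken in the extended nonnegative reals.\<close>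
definition A1 :: "('f \<Rightarrow> real) \<Rightarrow> ('f \<Rightarrow> real) \<Rightarrow> nat \<Rightarrow> (nat \<Rightarrow> 'f) set" where
  "A1 lam b C1 = {x.
      (\<forall>j\<ge>C1. (\<Prod>i=1..j. lam (x i)) \<le> 1 - 1 / real C1) \<and>
      ennreal (b (x 1)) + (\<Sum>i. ennreal ((\<Prod>k=1..i+1. lam (x k)) * b (x (i + 2))))
        \<le> ennreal (real C1)}"

definition A2 :: "(real \<Rightarrow> 'f \<Rightarrow> real) \<Rightarrow> nat \<Rightarrow> nat \<Rightarrow> (nat \<Rightarrow> 'f) set" where
  "A2 eta C1 C2 = {x. eta (2 * real C1 * (2 * real C1 + 1)) (x 0) \<ge> 1 / (real C2 + 1)}"

definition AC :: "('f \<Rightarrow> real) \<Rightarrow> ('f \<Rightarrow> real) \<Rightarrow> (real \<Rightarrow> 'f \<Rightarrow> real) \<Rightarrow> nat \<Rightarrow> nat \<Rightarrow> (nat \<Rightarrow> 'f) set" where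
  "AC lam b eta C1 C2 = A1 lam b C1 \<inter> A2 eta C1 C2"

text \<open>rho_C = P(xi_0 \<in> A_C | X^{-1}(I)) (a fixed version of the conditional probability).\<close>
definition rhoC :: "'a measure \<Rightarrow> (int \<Rightarrow> 'a \<Rightarrow> 'f::topological_space) \<Rightarrow> ('f \<Rightarrow> real) \<Rightarrow> ('f \<Rightarrow> real)
    \<Rightarrow> (real \<Rightarrow> 'f \<Rightarrow> real) \<Rightarrow> nat \<Rightarrow> nat \<Rightarrow> 'a \<Rightarrow> real" where
  "rhoC M X lam b eta C1 C2 =
     real_cond_exp M (inv_sigma M X) (\<lambda>\<omega>. indicator (AC lam b eta C1 C2) (xi X 0 \<omega>))"

end

(*
  Part 1 holds pathwise. By the root test the products of lam(X_{-1}), ..., lam(X_{-n}) decay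
  geometrically, while stationarity, integrability of log+ b(X_0) and Borel-Cantelli make
  b(X_{-i}) grow subexponentially; hence the series in the definition of A_{1,C1} converges and
  the products eventually stay below 1/2, so some C1 works.

  Part 2 is Birkhoff's ergodic theorem, proved here for bounded functions from the maximal
  ergodic lemma, applied on the path space to the shift and to its inverse; both limits are the
  conditional expectation rho_C given the shift-invariant sigma-algebra. A conditional
  expectation of a nonnegative function is a.s. positive where the function is, so rho_C > 0 on
  {xi_0 in A_C}, and almost surely xi_0 lies in some A_C. Hence C(omega) can be chosen
  measurably as the first pair, in an enumeration of pairs, with rho_C(omega) > 0.
*)
theory Submission
  imports Defs
begin

section \<open>Birkhoff sums\<close>

definition birkhoff_sum :: "('a \<Rightarrow> 'a) \<Rightarrow> ('a \<Rightarrow> real) \<Rightarrow> nat \<Rightarrow> 'a \<Rightarrow> real" where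
  "birkhoff_sum T f n x = (\<Sum>i<n. f ((T ^^ i) x))"

definition birkhoff_max :: "('a \<Rightarrow> 'a) \<Rightarrow> ('a \<Rightarrow> real) \<Rightarrow> nat \<Rightarrow> 'a \<Rightarrow> real" where
  "birkhoff_max T f n x = Max ((\<lambda>k. birkhoff_sum T f k x) ` {..n})"

definition birkhoff_limsup :: "('a \<Rightarrow> 'a) \<Rightarrow> ('a \<Rightarrow> real) \<Rightarrow> 'a \<Rightarrow> ereal" where
  "birkhoff_limsup T f x = limsup (\<lambda>n. ereal (birkhoff_sum T f n x / n))"

definition birkhoff_liminf :: "('a \<Rightarrow> 'a) \<Rightarrow> ('a \<Rightarrow> real) \<Rightarrow> 'a \<Rightarrow> ereal" where
  "birkhoff_liminf T f x = liminf (\<lambda>n. ereal (birkhoff_sum T f n x / n))"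

lemma birkhoff_sum_0 [simp]: "birkhoff_sum T f 0 x = 0"
  by (simp add: birkhoff_sum_def)

lemma birkhoff_sum_Suc: "birkhoff_sum T f (Suc n) x = f x + birkhoff_sum T f n (T x)"
  unfolding birkhoff_sum_def
  by (subst sum.lessThan_Suc_shift) (simp add: funpow_Suc_right del: funpow.simps)

lemma birkhoff_sum_diff_const: "birkhoff_sum T (\<lambda>y. f y - c) n x = birkhoff_sum T f n x - n * c"
  by (simp add: birkhoff_sum_def sum_subtractf)

lemma birkhoff_sum_const_diff: "birkhoff_sum T (\<lambda>y. c - f y) n x = n * c - birkhoff_sum T f n x"
  by (simp add: birkhoff_sum_def sum_subtractf)

lemma birkhoff_sum_comp_T: "birkhoff_sum T (\<lambda>y. f (T y)) n x = (\<Sum>i=1..n. f ((T ^^ i) x))"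
  unfolding birkhoff_sum_def using sum.atLeast1_atMost_eq[of "\<lambda>i. f ((T ^^ i) x)" n] by simp

lemma abs_birkhoff_sum_le:
  assumes "\<And>y. \<bar>f y\<bar> \<le> K"
  shows "\<bar>birkhoff_sum T f n x\<bar> \<le> n * K"
proof -
  have "\<bar>birkhoff_sum T f n x\<bar> \<le> (\<Sum>i<n. \<bar>f ((T ^^ i) x)\<bar>)"
    unfolding birkhoff_sum_def by (rule sum_abs)
  also have "\<dots> \<le> n * K"
    using sum_mono[of "{..<n}" "\<lambda>i. \<bar>f ((T ^^ i) x)\<bar>" "\<lambda>_. K"] assms by simp
  finally show ?thesis .
qed

lemma abs_birkhoff_avg_le:
  assumes "\<And>y. \<bar>f y\<bar> \<le> K"
  shows "\<bar>birkhoff_sum T f n x / n\<bar> \<le> K"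
proof (cases "n = 0")
  case False
  then show ?thesis
    using abs_birkhoff_sum_le[where f=f, OF assms] by (simp add: abs_divide divide_le_eq mult.commute)
qed (use assms[of x] in simp)

lemma measurable_birkhoff_sum:
  assumes T: "T \<in> M \<rightarrow>\<^sub>M M" and f: "f \<in> borel_measurable M"
  shows "birkhoff_sum T f n \<in> borel_measurable M"
proof -
  have "(\<lambda>x. f ((T ^^ i) x)) \<in> borel_measurable M" for i
    using measurable_comp[OF measurable_compose_n[OF T] f] by (simp add: comp_def)
  then show ?thesis unfolding birkhoff_sum_def by (intro borel_measurable_sum)
qed

lemma birkhoff_sum_le_max: "k \<le> n \<Longrightarrow> birkhoff_sum T f k x \<le> birkhoff_max T f n x"
  unfolding birkhoff_max_def by (intro Max_ge) auto

lemma birkhoff_max_attained: "\<exists>k\<le>n. birkhoff_max T f n x = birkhoff_sum T f k x"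
proof -
  have "birkhoff_max T f n x \<in> (\<lambda>k. birkhoff_sum T f k x) ` {..n}"
    unfolding birkhoff_max_def by (rule Max_in) auto
  then show ?thesis by auto
qed

lemma birkhoff_max_nonneg: "0 \<le> birkhoff_max T f n x"
  using birkhoff_sum_le_max[of 0 n T f x] by simp

lemma birkhoff_max_pos_iff: "0 < birkhoff_max T f n x \<longleftrightarrow> (\<exists>k\<le>n. 0 < birkhoff_sum T f k x)"
proof
  assume "0 < birkhoff_max T f n x"
  then show "\<exists>k\<le>n. 0 < birkhoff_sum T f k x"
    using birkhoff_max_attained[of n T f x] by auto
next
  assume "\<exists>k\<le>n. 0 < birkhoff_sum T f k x"
  then obtain k where "k \<le> n" "0 < birkhoff_sum T f k x" by blast
  then show "0 < birkhoff_max T f n x"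
    using birkhoff_sum_le_max[of k n T f x] by linarith
qed

text \<open>Garsia's inequality, the heart of the maximal ergodic lemma.\<close>

lemma birkhoff_max_diff_le:
  "birkhoff_max T f n x - birkhoff_max T f n (T x) \<le> indicator {y. 0 < birkhoff_max T f n y} x * f x"
proof (cases "0 < birkhoff_max T f n x")
  case True
  obtain k where k: "k \<le> n" "birkhoff_max T f n x = birkhoff_sum T f k x"
    using birkhoff_max_attained[of n T f x] by blast
  with True obtain j where j: "k = Suc j" by (cases k) auto
  have "birkhoff_max T f n x = f x + birkhoff_sum T f j (T x)"
    unfolding k(2) j by (rule birkhoff_sum_Suc)
  moreover have "birkhoff_sum T f j (T x) \<le> birkhoff_max T f n (T x)"
    using k(1) j by (intro birkhoff_sum_le_max) simp
  moreover have "indicator {y. 0 < birkhoff_max T f n y} x = (1::real)"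
    using True by simp
  ultimately show ?thesis by simp
next
  case False
  then show ?thesis using birkhoff_max_nonneg[of T f n "T x"] by simp
qed

lemma abs_birkhoff_max_le:
  assumes "\<And>y. \<bar>f y\<bar> \<le> K"
  shows "\<bar>birkhoff_max T f n x\<bar> \<le> n * K"
proof -
  have K: "0 \<le> K" using order_trans[OF abs_ge_zero assms] .
  obtain k where "k \<le> n" "birkhoff_max T f n x = birkhoff_sum T f k x"
    using birkhoff_max_attained[of n T f x] by blast
  moreover have "\<bar>birkhoff_sum T f k x\<bar> \<le> k * K" by (rule abs_birkhoff_sum_le[where f=f, OF assms])
  moreover have "real k * K \<le> n * K" using \<open>k \<le> n\<close> K by (intro mult_right_mono) auto
  ultimately show ?thesis by simp
qed

lemma measurable_birkhoff_max:
  assumes "T \<in> M \<rightarrow>\<^sub>M M" "f \<in> borel_measurable M"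
  shows "birkhoff_max T f n \<in> borel_measurable M"
proof -
  have [measurable]: "birkhoff_sum T f k \<in> borel_measurable M" for k
    by (rule measurable_birkhoff_sum[OF assms])
  show ?thesis unfolding birkhoff_max_def[abs_def] by measurable
qed

lemma measurable_birkhoff_limsup:
  assumes "T \<in> M \<rightarrow>\<^sub>M M" "f \<in> borel_measurable M"
  shows "birkhoff_limsup T f \<in> borel_measurable M" "birkhoff_liminf T f \<in> borel_measurable M"
proof -
  have [measurable]: "birkhoff_sum T f k \<in> borel_measurable M" for k
    by (rule measurable_birkhoff_sum[OF assms])
  show "birkhoff_limsup T f \<in> borel_measurable M" unfolding birkhoff_limsup_def[abs_def] by measurable
  show "birkhoff_liminf T f \<in> borel_measurable M" unfolding birkhoff_liminf_def[abs_def] by measurable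
qed

lemma birkhoff_avg_T_diff:
  assumes f: "\<And>y. \<bar>f y\<bar> \<le> K"
  shows "(\<lambda>n. birkhoff_sum T f n (T x) / n - birkhoff_sum T f (Suc n) x / Suc n) \<longlonglongrightarrow> 0"
proof (rule Lim_null_comparison)
  show "(\<lambda>n. 2 * K / real (Suc n)) \<longlonglongrightarrow> 0"
    using LIMSEQ_Suc[OF lim_const_over_n[of "2 * K"]] by simp
  show "\<forall>\<^sub>F n in sequentially. norm (birkhoff_sum T f n (T x) / n - birkhoff_sum T f (Suc n) x / Suc n)
      \<le> 2 * K / real (Suc n)"
  proof (intro always_eventually allI)
    fix n
    let ?s = "birkhoff_sum T f n (T x)"
    have eq: "birkhoff_sum T f n (T x) / n - birkhoff_sum T f (Suc n) x / Suc n
        = ?s / (real n * Suc n) - f x / Suc n"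
    proof (cases "n = 0")
      case False
      then have "real n > 0" by simp
      then have "real n + real n * real n > 0" by (simp add: add_pos_pos)
      then show ?thesis by (simp add: birkhoff_sum_Suc divide_simps) (simp add: algebra_simps)
    qed (simp add: birkhoff_sum_Suc)
    have "\<bar>?s / (real n * Suc n)\<bar> \<le> K / Suc n"
    proof (cases "n = 0")
      case False
      have "\<bar>?s / (real n * Suc n)\<bar> = \<bar>?s\<bar> / (real n * Suc n)" by (simp add: abs_divide)
      also have "\<dots> \<le> (real n * K) / (real n * Suc n)"
        using abs_birkhoff_sum_le[where f=f, OF f] by (intro divide_right_mono) auto
      also have "\<dots> = K / Suc n" using False by (intro mult_divide_mult_cancel_left) simp
      finally show ?thesis .
    qed (use f[of x] in simp)
    moreover have "\<bar>f x / Suc n\<bar> \<le> K / Suc n"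
      using f[of x] by (simp add: abs_divide divide_right_mono)
    ultimately have "\<bar>?s / (real n * Suc n)\<bar> + \<bar>f x / Suc n\<bar> \<le> 2 * K / Suc n"
      by simp
    then show "norm (birkhoff_sum T f n (T x) / n - birkhoff_sum T f (Suc n) x / Suc n) \<le> 2 * K / Suc n"
      unfolding eq real_norm_def by (rule order_trans[OF abs_triangle_ineq4])
  qed
qed

lemma birkhoff_limsup_T:
  assumes "\<And>y. \<bar>f y\<bar> \<le> K"
  shows "birkhoff_limsup T f (T x) = birkhoff_limsup T f x"
proof -
  let ?d = "\<lambda>n. birkhoff_sum T f n (T x) / n - birkhoff_sum T f (Suc n) x / Suc n"
  have d: "(\<lambda>n. ereal (?d n)) \<longlonglongrightarrow> 0"
    using birkhoff_avg_T_diff[where f=f, OF assms] by (simp add: zero_ereal_def)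
  have "birkhoff_limsup T f (T x) = limsup (\<lambda>n. ereal (?d n) + ereal (birkhoff_sum T f (Suc n) x / Suc n))"
    unfolding birkhoff_limsup_def by simp
  also have "\<dots> = limsup (\<lambda>n. ereal (birkhoff_sum T f (Suc n) x / Suc n))"
    using ereal_limsup_lim_add[OF d, of "\<lambda>n. ereal (birkhoff_sum T f (Suc n) x / Suc n)"] by simp
  also have "\<dots> = birkhoff_limsup T f x"
    unfolding birkhoff_limsup_def using limsup_shift[of "\<lambda>n. ereal (birkhoff_sum T f n x / n)"] by simp
  finally show ?thesis .
qed

lemma birkhoff_liminf_T:
  assumes "\<And>y. \<bar>f y\<bar> \<le> K"
  shows "birkhoff_liminf T f (T x) = birkhoff_liminf T f x"
proof -
  let ?d = "\<lambda>n. birkhoff_sum T f n (T x) / n - birkhoff_sum T f (Suc n) x / Suc n"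
  have d: "(\<lambda>n. ereal (?d n)) \<longlonglongrightarrow> 0"
    using birkhoff_avg_T_diff[where f=f, OF assms] by (simp add: zero_ereal_def)
  have "birkhoff_liminf T f (T x) = liminf (\<lambda>n. ereal (?d n) + ereal (birkhoff_sum T f (Suc n) x / Suc n))"
    unfolding birkhoff_liminf_def by simp
  also have "\<dots> = liminf (\<lambda>n. ereal (birkhoff_sum T f (Suc n) x / Suc n))"
    using ereal_liminf_lim_add[OF d, of "\<lambda>n. ereal (birkhoff_sum T f (Suc n) x / Suc n)"] by simp
  also have "\<dots> = birkhoff_liminf T f x"
    unfolding birkhoff_liminf_def using liminf_shift[of "\<lambda>n. ereal (birkhoff_sum T f n x / n)"] by simp
  finally show ?thesis .
qed

lemma birkhoff_limsup_bounds:
  assumes "\<And>y. \<bar>f y\<bar> \<le> K"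
  shows "- ereal K \<le> birkhoff_liminf T f x" "birkhoff_liminf T f x \<le> birkhoff_limsup T f x"
    "birkhoff_limsup T f x \<le> ereal K"
proof -
  have avg: "- ereal K \<le> ereal (birkhoff_sum T f n x / n)"
    "ereal (birkhoff_sum T f n x / n) \<le> ereal K" for n
    using abs_birkhoff_avg_le[where f=f and T=T and n=n and x=x, OF assms] unfolding abs_le_iff by auto
  show "- ereal K \<le> birkhoff_liminf T f x"
    unfolding birkhoff_liminf_def by (intro Liminf_bounded always_eventually) (use avg in auto)
  show "birkhoff_liminf T f x \<le> birkhoff_limsup T f x"
    unfolding birkhoff_liminf_def birkhoff_limsup_def by (intro Liminf_le_Limsup) simp
  show "birkhoff_limsup T f x \<le> ereal K"
    unfolding birkhoff_limsup_def by (intro Limsup_bounded always_eventually) (use avg in auto)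
qed

lemma abs_real_of_birkhoff_limsup_le:
  assumes "\<And>y. \<bar>f y\<bar> \<le> K"
  shows "\<bar>real_of_ereal (birkhoff_limsup T f x)\<bar> \<le> K"
  using birkhoff_limsup_bounds[where f=f and T=T and x=x, OF assms]
  by (cases "birkhoff_limsup T f x"; cases "birkhoff_liminf T f x") auto

lemma ex_less_of_less_limsup:
  assumes "ereal c < limsup (\<lambda>n. ereal (u n))"
  shows "\<exists>n\<ge>N. c < u n"
proof (rule ccontr)
  assume "\<not> (\<exists>n\<ge>N. c < u n)"
  then have "limsup (\<lambda>n. ereal (u n)) \<le> ereal c"
    by (intro Limsup_bounded eventually_sequentiallyI[of N]) (auto simp: not_less)
  with assms show False by simp
qed

lemma ex_greater_of_liminf_less:
  assumes "liminf (\<lambda>n. ereal (u n)) < ereal c"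
  shows "\<exists>n\<ge>N. u n < c"
proof (rule ccontr)
  assume "\<not> (\<exists>n\<ge>N. u n < c)"
  then have "ereal c \<le> liminf (\<lambda>n. ereal (u n))"
    by (intro Liminf_bounded eventually_sequentiallyI[of N]) (auto simp: not_less)
  with assms show False by simp
qed

lemma (in finite_measure) integrable_abs_bounded:
  fixes f :: "'a \<Rightarrow> real"
  assumes "f \<in> borel_measurable M" and "\<And>x. \<bar>f x\<bar> \<le> B"
  shows "integrable M f"
  using assms by (intro integrable_const_bound[where B=B] AE_I2) auto

section \<open>The pointwise ergodic theorem for bounded functions\<close>

locale mpt = prob_space M for M :: "'a measure" +
  fixes T :: "'a \<Rightarrow> 'a"
  assumes measurable_T [measurable]: "T \<in> M \<rightarrow>\<^sub>M M"
    and distr_T: "distr M M T = M"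
begin

lemma integral_T:
  fixes f :: "'a \<Rightarrow> real"
  assumes "f \<in> borel_measurable M"
  shows "(\<integral>x. f (T x) \<partial>M) = (\<integral>x. f x \<partial>M)"
  using integral_distr[OF measurable_T assms] distr_T by simp

lemma integral_indicator_comp_T:
  fixes f :: "'a \<Rightarrow> real"
  assumes I [measurable]: "I \<in> sets M" and inv: "T -` I \<inter> space M = I"
    and f [measurable]: "f \<in> borel_measurable M"
  shows "(\<integral>x. indicator I x * f (T x) \<partial>M) = (\<integral>x. indicator I x * f x \<partial>M)"
proof -
  have "(\<integral>x. indicator I x * f (T x) \<partial>M) = (\<integral>x. indicator I (T x) * f (T x) \<partial>M)"
    using inv by (intro Bochner_Integration.integral_cong) (auto simp: indicator_def)
  also have "\<dots> = (\<integral>x. indicator I x * f x \<partial>M)"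
    by (rule integral_T) measurable
  finally show ?thesis .
qed

lemma mpt_funpow: "mpt M (T ^^ n)"
proof (intro mpt.intro mpt_axioms.intro)
  show "prob_space M" by (rule prob_space_axioms)
  show "T ^^ n \<in> M \<rightarrow>\<^sub>M M" by (rule measurable_compose_n[OF measurable_T])
  show "distr M M (T ^^ n) = M"
  proof (induction n)
    case 0
    then show ?case by (simp add: distr_id2[unfolded id_def] cong: distr_cong)
  next
    case (Suc n)
    have "distr M M (T ^^ Suc n) = distr (distr M M (T ^^ n)) M T"
      using distr_distr[OF measurable_T measurable_compose_n[OF measurable_T], of n] by simp
    also have "\<dots> = M" using Suc distr_T by (simp only:)
    finally show ?case .
  qed
qed

lemma funpow_in_invariant_iff:
  assumes inv: "T -` A \<inter> space M = A" and x: "x \<in> space M"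
  shows "(T ^^ i) x \<in> A \<longleftrightarrow> x \<in> A"
proof (induction i)
  case (Suc i)
  have "(T ^^ i) x \<in> space M"
    using measurable_space[OF measurable_compose_n[OF measurable_T] x] .
  then show ?case using Suc inv by auto
qed simp

lemma birkhoff_sum_indicator_invariant:
  assumes "T -` A \<inter> space M = A" "x \<in> space M"
  shows "birkhoff_sum T (\<lambda>y. indicator A y * h y) n x = indicator A x * birkhoff_sum T h n x"
  unfolding birkhoff_sum_def using funpow_in_invariant_iff[OF assms]
  by (simp add: sum_distrib_left indicator_def)

lemma maximal_ergodic_finite:
  assumes h [measurable]: "h \<in> borel_measurable M" and bound: "\<And>x. \<bar>h x\<bar> \<le> K"
  shows "0 \<le> (\<integral>x. indicator {x. 0 < birkhoff_max T h n x} x * h x \<partial>M)"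
proof -
  have K: "0 \<le> K" using order_trans[OF abs_ge_zero bound] .
  have [measurable]: "birkhoff_max T h n \<in> borel_measurable M"
    by (rule measurable_birkhoff_max[OF measurable_T h])
  have int_max: "integrable M (birkhoff_max T h n)"
    by (rule integrable_abs_bounded[OF _ abs_birkhoff_max_le[where f=h, OF bound]]) measurable
  have int_max_T: "integrable M (\<lambda>x. birkhoff_max T h n (T x))"
    by (rule integrable_abs_bounded[OF _ abs_birkhoff_max_le[where f=h, OF bound]]) measurable
  have int_I: "integrable M (\<lambda>x. indicator {x. 0 < birkhoff_max T h n x} x * h x)"
    by (rule integrable_abs_bounded[where B=K]) (use bound K in \<open>measurable, auto simp: indicator_def\<close>)
  have "0 = (\<integral>x. birkhoff_max T h n x \<partial>M) - (\<integral>x. birkhoff_max T h n (T x) \<partial>M)"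
    using integral_T[of "birkhoff_max T h n"] by simp
  also have "\<dots> = (\<integral>x. birkhoff_max T h n x - birkhoff_max T h n (T x) \<partial>M)"
    using int_max int_max_T by simp
  also have "\<dots> \<le> (\<integral>x. indicator {x. 0 < birkhoff_max T h n x} x * h x \<partial>M)"
    by (intro integral_mono int_I Bochner_Integration.integrable_diff int_max int_max_T
        birkhoff_max_diff_le)
  finally show ?thesis .
qed

lemma maximal_ergodic:
  assumes h [measurable]: "h \<in> borel_measurable M" and bound: "\<And>x. \<bar>h x\<bar> \<le> K"
  shows "0 \<le> (\<integral>x. indicator {x. \<exists>k. 0 < birkhoff_sum T h k x} x * h x \<partial>M)"
proof -
  have K: "0 \<le> K" using order_trans[OF abs_ge_zero bound] .
  have [measurable]: "birkhoff_sum T h k \<in> borel_measurable M"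
    "birkhoff_max T h k \<in> borel_measurable M" for k
    using measurable_birkhoff_sum[OF measurable_T h] measurable_birkhoff_max[OF measurable_T h] by auto
  let ?I = "\<lambda>n x. indicator {x. 0 < birkhoff_max T h n x} x * h x"
  have "(\<lambda>n. \<integral>x. ?I n x \<partial>M) \<longlonglongrightarrow> (\<integral>x. indicator {x. \<exists>k. 0 < birkhoff_sum T h k x} x * h x \<partial>M)"
  proof (rule integral_dominated_convergence[where w="\<lambda>_. K"])
    show "(\<lambda>x. indicator {x. \<exists>k. 0 < birkhoff_sum T h k x} x * h x) \<in> borel_measurable M"
      by measurable
    show "(\<lambda>x. ?I n x) \<in> borel_measurable M" for n
      by measurable
    show "AE x in M. norm (?I n x) \<le> K" for n
      by (intro AE_I2) (use bound K in \<open>auto simp: indicator_def\<close>)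
    show "AE x in M. (\<lambda>n. ?I n x) \<longlonglongrightarrow> indicator {x. \<exists>k. 0 < birkhoff_sum T h k x} x * h x"
    proof (rule AE_I2)
      fix x
      show "(\<lambda>n. ?I n x) \<longlonglongrightarrow> indicator {x. \<exists>k. 0 < birkhoff_sum T h k x} x * h x"
      proof (cases "\<exists>k. 0 < birkhoff_sum T h k x")
        case True
        then obtain k where k: "0 < birkhoff_sum T h k x" by blast
        have "\<forall>\<^sub>F n in sequentially. ?I n x = h x"
        proof (rule eventually_sequentiallyI[of k])
          fix n assume "k \<le> n"
          with k have "0 < birkhoff_max T h n x" by (auto simp: birkhoff_max_pos_iff)
          then show "?I n x = h x" by simp
        qed
        then have "(\<lambda>n. ?I n x) \<longlonglongrightarrow> h x" by (rule tendsto_eventually)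
        with True show ?thesis by simp
      next
        case False
        then show ?thesis by (simp add: birkhoff_max_pos_iff)
      qed
    qed
  qed simp
  with maximal_ergodic_finite[OF h bound] show ?thesis by (intro LIMSEQ_le_const) auto
qed

lemma maximal_ergodic_invariant:
  assumes A [measurable]: "A \<in> sets M" and inv: "T -` A \<inter> space M = A"
    and h [measurable]: "h \<in> borel_measurable M" and bound: "\<And>x. \<bar>h x\<bar> \<le> K"
    and pos: "\<And>x. x \<in> A \<Longrightarrow> \<exists>n. 0 < birkhoff_sum T h n x"
  shows "0 \<le> (\<integral>x. indicator A x * h x \<partial>M)"
proof -
  let ?g = "\<lambda>x. indicator A x * h x"
  have "0 \<le> (\<integral>x. indicator {x. \<exists>k. 0 < birkhoff_sum T ?g k x} x * ?g x \<partial>M)"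
  proof (rule maximal_ergodic[where K=K])
    show "?g \<in> borel_measurable M" by measurable
    show "\<bar>?g x\<bar> \<le> K" for x
      using bound[of x] order_trans[OF abs_ge_zero bound] by (cases "x \<in> A") auto
  qed
  also have "\<dots> = (\<integral>x. ?g x \<partial>M)"
  proof (rule Bochner_Integration.integral_cong[OF refl])
    fix x assume x: "x \<in> space M"
    show "indicator {x. \<exists>k. 0 < birkhoff_sum T ?g k x} x * ?g x = ?g x"
      using pos[of x] birkhoff_sum_indicator_invariant[OF inv x, of h] by (auto simp: indicator_def)
  qed
  finally show ?thesis .
qed

lemma integral_nonneg_if_less_birkhoff_limsup:
  fixes b :: real
  assumes E: "E \<in> sets M" and inv: "T -` E \<inter> space M = E"
    and f [measurable]: "f \<in> borel_measurable M" and bound: "\<And>x. \<bar>f x\<bar> \<le> K"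
    and less: "\<And>x. x \<in> E \<Longrightarrow> ereal b < birkhoff_limsup T f x"
  shows "0 \<le> (\<integral>x. indicator E x * (f x - b) \<partial>M)"
proof (rule maximal_ergodic_invariant[OF E inv])
  show "\<bar>f x - b\<bar> \<le> K + \<bar>b\<bar>" for x
    using abs_triangle_ineq4[of "f x" b] bound[of x] by linarith
  fix x assume "x \<in> E"
  from less[OF this] have "\<exists>n\<ge>1. b < birkhoff_sum T f n x / n"
    unfolding birkhoff_limsup_def by (rule ex_less_of_less_limsup)
  then obtain n where "1 \<le> n" "b < birkhoff_sum T f n x / n" by auto
  then show "\<exists>n. 0 < birkhoff_sum T (\<lambda>y. f y - b) n x"
    by (auto simp: birkhoff_sum_diff_const field_simps)
qed measurable

lemma integral_nonneg_if_birkhoff_liminf_less: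
  fixes a :: real
  assumes E: "E \<in> sets M" and inv: "T -` E \<inter> space M = E"
    and f [measurable]: "f \<in> borel_measurable M" and bound: "\<And>x. \<bar>f x\<bar> \<le> K"
    and less: "\<And>x. x \<in> E \<Longrightarrow> birkhoff_liminf T f x < ereal a"
  shows "0 \<le> (\<integral>x. indicator E x * (a - f x) \<partial>M)"
proof (rule maximal_ergodic_invariant[OF E inv])
  show "\<bar>a - f x\<bar> \<le> \<bar>a\<bar> + K" for x
    using abs_triangle_ineq4[of a "f x"] bound[of x] by linarith
  fix x assume "x \<in> E"
  from less[OF this] have "\<exists>n\<ge>1. birkhoff_sum T f n x / n < a"
    unfolding birkhoff_liminf_def by (rule ex_greater_of_liminf_less)
  then obtain n where "1 \<le> n" "birkhoff_sum T f n x / n < a" by auto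
  then show "\<exists>n. 0 < birkhoff_sum T (\<lambda>y. a - f y) n x"
    by (auto simp: birkhoff_sum_const_diff field_simps)
qed measurable

lemma birkhoff_oscillation_null:
  fixes a b :: real
  assumes f [measurable]: "f \<in> borel_measurable M" and bound: "\<And>x. \<bar>f x\<bar> \<le> K" and "a < b"
  shows "{x \<in> space M. birkhoff_liminf T f x < a \<and> b < birkhoff_limsup T f x} \<in> null_sets M"
proof -
  define E where "E = {x \<in> space M. birkhoff_liminf T f x < a \<and> b < birkhoff_limsup T f x}"
  have [measurable]: "birkhoff_limsup T f \<in> borel_measurable M" "birkhoff_liminf T f \<in> borel_measurable M"
    using measurable_birkhoff_limsup[OF measurable_T f] by auto
  have E [measurable]: "E \<in> sets M" unfolding E_def by measurable
  have inv: "T -` E \<inter> space M = E"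
    using birkhoff_limsup_T[where f=f, OF bound] birkhoff_liminf_T[where f=f, OF bound]
      measurable_space[OF measurable_T] unfolding E_def by auto
  have "0 \<le> (\<integral>x. indicator E x * (f x - b) \<partial>M)"
    by (rule integral_nonneg_if_less_birkhoff_limsup[OF E inv f bound]) (simp add: E_def)
  moreover have "0 \<le> (\<integral>x. indicator E x * (a - f x) \<partial>M)"
    by (rule integral_nonneg_if_birkhoff_liminf_less[OF E inv f bound]) (simp add: E_def)
  moreover have "integrable M (\<lambda>x. indicator E x * g x)" if "integrable M g" for g :: "'a \<Rightarrow> real"
    using integrable_mult_indicator[OF E that] by simp
  moreover have "integrable M f" by (rule integrable_abs_bounded[OF f bound])
  ultimately have "0 \<le> (\<integral>x. indicator E x * (f x - b) + indicator E x * (a - f x) \<partial>M)"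
    by (subst Bochner_Integration.integral_add) auto
  also have "\<dots> = (\<integral>x. (a - b) * indicator E x \<partial>M)"
    by (intro Bochner_Integration.integral_cong) (auto simp: algebra_simps)
  also have "\<dots> = (a - b) * measure M E"
    using E by simp
  finally have "measure M E = 0" using \<open>a < b\<close> by (simp add: zero_le_mult_iff antisym measure_nonneg)
  then show ?thesis using E unfolding E_def[symmetric] by (simp add: null_sets_def emeasure_eq_measure)
qed

theorem birkhoff_AE:
  assumes f: "f \<in> borel_measurable M" and bound: "\<And>x. \<bar>f x\<bar> \<le> K"
  shows "AE x in M. (\<lambda>n. birkhoff_sum T f n x / n) \<longlonglongrightarrow> real_of_ereal (birkhoff_limsup T f x)"
proof -
  have "AE x in M. \<forall>q::rat \<times> rat. fst q < snd q \<longrightarrow>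
      \<not> (birkhoff_liminf T f x < of_rat (fst q) \<and> of_rat (snd q) < birkhoff_limsup T f x)"
  proof (subst AE_all_countable, intro allI)
    fix q :: "rat \<times> rat"
    show "AE x in M. fst q < snd q \<longrightarrow>
      \<not> (birkhoff_liminf T f x < of_rat (fst q) \<and> of_rat (snd q) < birkhoff_limsup T f x)"
    proof (cases "fst q < snd q")
      case True
      then have "of_rat (fst q) < (of_rat (snd q) :: real)" by (simp add: of_rat_less)
      from birkhoff_oscillation_null[OF f bound this] show ?thesis
        by (rule AE_I') auto
    qed simp
  qed
  then show ?thesis
  proof (rule AE_mp, intro AE_I2 impI)
    fix x
    assume no_gap: "\<forall>q::rat \<times> rat. fst q < snd q \<longrightarrow>
      \<not> (birkhoff_liminf T f x < of_rat (fst q) \<and> of_rat (snd q) < birkhoff_limsup T f x)"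
    note bounds = birkhoff_limsup_bounds[where f=f and T=T and x=x, OF bound]
    obtain l where l: "birkhoff_liminf T f x = ereal l" using bounds by (cases "birkhoff_liminf T f x") auto
    obtain u where u: "birkhoff_limsup T f x = ereal u" using bounds by (cases "birkhoff_limsup T f x") auto
    have "l = u"
    proof (rule ccontr)
      assume "l \<noteq> u"
      then have "l < u" using bounds(2) l u by simp
      obtain r1 where r1: "r1 \<in> \<rat>" "l < r1" "r1 < u" using Rats_dense_in_real[OF \<open>l < u\<close>] by blast
      obtain r2 where r2: "r2 \<in> \<rat>" "r1 < r2" "r2 < u" using Rats_dense_in_real[OF r1(3)] by blast
      obtain q1 q2 where "r1 = of_rat q1" "r2 = of_rat q2" using r1(1) r2(1) Rats_cases by metis
      with r1 r2 l u no_gap[rule_format, of "(q1, q2)"] show False by (simp add: of_rat_less)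
    qed
    then have "(\<lambda>n. ereal (birkhoff_sum T f n x / n)) \<longlonglongrightarrow> ereal u"
      using l u unfolding birkhoff_liminf_def birkhoff_limsup_def by (intro Liminf_eq_Limsup) auto
    then show "(\<lambda>n. birkhoff_sum T f n x / n) \<longlonglongrightarrow> real_of_ereal (birkhoff_limsup T f x)"
      using u by simp
  qed
qed

lemma integral_birkhoff_avg_invariant:
  assumes f [measurable]: "f \<in> borel_measurable M" and bound: "\<And>x. \<bar>f x\<bar> \<le> K"
    and I [measurable]: "I \<in> sets M" and inv: "T -` I \<inter> space M = I" and "1 \<le> n"
  shows "(\<integral>x. indicator I x * (birkhoff_sum T f n x / n) \<partial>M) = (\<integral>x. indicator I x * f x \<partial>M)"
proof -
  have K: "0 \<le> K" using order_trans[OF abs_ge_zero bound] .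
  have orbit: "(\<integral>x. indicator I x * f ((T ^^ i) x) \<partial>M) = (\<integral>x. indicator I x * f x \<partial>M)" for i
  proof -
    interpret Ti: mpt M "T ^^ i" by (rule mpt_funpow)
    have "(T ^^ i) -` I \<inter> space M = I"
      using funpow_in_invariant_iff[OF inv] sets.sets_into_space[OF I] by auto
    then show ?thesis by (rule Ti.integral_indicator_comp_T[OF I _ f])
  qed
  have int: "integrable M (\<lambda>x. indicator I x * f ((T ^^ i) x))" for i
    by (rule integrable_abs_bounded[where B=K]) (use bound K in \<open>measurable, auto simp: indicator_def\<close>)
  have "(\<integral>x. indicator I x * (birkhoff_sum T f n x / n) \<partial>M)
      = (\<integral>x. (\<Sum>i<n. indicator I x * f ((T ^^ i) x)) \<partial>M) / n"
    by (simp add: birkhoff_sum_def sum_distrib_left)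
  also have "\<dots> = (\<Sum>i<n. \<integral>x. indicator I x * f ((T ^^ i) x) \<partial>M) / n"
    by (subst Bochner_Integration.integral_sum) (use int in auto)
  also have "\<dots> = (\<integral>x. indicator I x * f x \<partial>M)"
    using \<open>1 \<le> n\<close> by (simp add: orbit)
  finally show ?thesis .
qed

lemma birkhoff_limsup_integral_invariant:
  assumes f [measurable]: "f \<in> borel_measurable M" and bound: "\<And>x. \<bar>f x\<bar> \<le> K"
    and I [measurable]: "I \<in> sets M" and inv: "T -` I \<inter> space M = I"
  shows "(\<integral>x. indicator I x * real_of_ereal (birkhoff_limsup T f x) \<partial>M) = (\<integral>x. indicator I x * f x \<partial>M)"
proof -
  have [measurable]: "birkhoff_sum T f n \<in> borel_measurable M"
    "birkhoff_limsup T f \<in> borel_measurable M" for n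
    using measurable_birkhoff_sum[OF measurable_T f] measurable_birkhoff_limsup[OF measurable_T f] by auto
  have K: "0 \<le> K" using order_trans[OF abs_ge_zero bound] .
  have "(\<lambda>n. \<integral>x. indicator I x * (birkhoff_sum T f n x / n) \<partial>M)
      \<longlonglongrightarrow> (\<integral>x. indicator I x * real_of_ereal (birkhoff_limsup T f x) \<partial>M)"
  proof (rule integral_dominated_convergence[where w="\<lambda>_. K"])
    show "AE x in M. norm (indicator I x * (birkhoff_sum T f n x / n)) \<le> K" for n
      using abs_birkhoff_avg_le[where f=f and T=T and n=n, OF bound] K
      by (intro AE_I2) (auto simp: indicator_def)
    show "AE x in M. (\<lambda>n. indicator I x * (birkhoff_sum T f n x / n))
        \<longlonglongrightarrow> indicator I x * real_of_ereal (birkhoff_limsup T f x)"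
      using birkhoff_AE[OF f bound] by eventually_elim (rule tendsto_mult_left)
    show "(\<lambda>x. indicator I x * real_of_ereal (birkhoff_limsup T f x)) \<in> borel_measurable M"
      by measurable
    show "(\<lambda>x. indicator I x * (birkhoff_sum T f n x / n)) \<in> borel_measurable M" for n
      by measurable
  qed simp
  moreover have "(\<lambda>n. \<integral>x. indicator I x * (birkhoff_sum T f n x / n) \<partial>M) \<longlonglongrightarrow> (\<integral>x. indicator I x * f x \<partial>M)"
    using integral_birkhoff_avg_invariant[OF f bound I inv]
    by (intro tendsto_eventually eventually_sequentiallyI[of 1])
  ultimately show ?thesis by (rule LIMSEQ_unique)
qed

end

section \<open>Stationary processes and the shift on the path space\<close>

abbreviation path_space :: "(int \<Rightarrow> 'f::topological_space) measure" where
  "path_space \<equiv> Pi\<^sub>M UNIV (\<lambda>_. borel)"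

definition shift_back :: "(int \<Rightarrow> 'f) \<Rightarrow> int \<Rightarrow> 'f" where
  "shift_back p = (\<lambda>t. p (t - 1))"

lemma space_path_space [simp]: "space path_space = UNIV"
  by (auto simp: space_PiM PiE_def extensional_def)

lemma shift_back_shiftZ [simp]: "shift_back (shiftZ p) = p"
  and shiftZ_shift_back [simp]: "shiftZ (shift_back p) = p"
  by (auto simp: shift_back_def shiftZ_def)

lemma funpow_shiftZ: "(shiftZ ^^ i) p = (\<lambda>t. p (t + int i))"
  by (induction i arbitrary: p)
    (auto simp: shiftZ_def funpow_Suc_right algebra_simps simp del: funpow.simps)

lemma funpow_shift_back: "(shift_back ^^ i) p = (\<lambda>t. p (t - int i))"
  by (induction i arbitrary: p)
    (auto simp: shift_back_def funpow_Suc_right algebra_simps simp del: funpow.simps)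

lemma measurable_shifted_path:
  assumes "\<And>t. X t \<in> M \<rightarrow>\<^sub>M borel"
  shows "(\<lambda>\<omega> t. X (t + s) \<omega>) \<in> M \<rightarrow>\<^sub>M path_space"
  by (rule measurable_PiM_single') (auto intro: assms)

lemma measurable_path:
  assumes "\<And>t. X t \<in> M \<rightarrow>\<^sub>M borel"
  shows "(\<lambda>\<omega> t. X t \<omega>) \<in> M \<rightarrow>\<^sub>M path_space"
  using measurable_shifted_path[where s=0, OF assms] by simp

lemma measurable_shiftZ: "shiftZ \<in> path_space \<rightarrow>\<^sub>M path_space"
  unfolding shiftZ_def by (rule measurable_PiM_single') (auto intro: measurable_component_singleton)

lemma measurable_shift_back: "shift_back \<in> path_space \<rightarrow>\<^sub>M path_space"
  unfolding shift_back_def by (rule measurable_PiM_single') (auto intro: measurable_component_singleton)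

lemma distr_shifted_path:
  fixes X :: "int \<Rightarrow> 'a \<Rightarrow> 'f::topological_space"
  assumes "prob_space M" and X: "\<And>t. X t \<in> M \<rightarrow>\<^sub>M borel" and "stationary M X"
  shows "distr M path_space (\<lambda>\<omega> t. X (t + s) \<omega>) = distr M path_space (\<lambda>\<omega> t. X t \<omega>)"
proof (rule measure_eqI_PiM_infinite)
  show "finite_measure (distr M path_space (\<lambda>\<omega> t. X (t + s) \<omega>))"
    using prob_space.prob_space_distr[OF assms(1) measurable_shifted_path[where X=X, OF X]]
      by (simp add: prob_space_def)
  fix J :: "int set" and A :: "int \<Rightarrow> 'f set"
  assume J: "finite J" "J \<subseteq> UNIV" and A: "\<And>i. i \<in> J \<Longrightarrow> A i \<in> sets borel"
  have cylinder: "emeasure (distr M path_space (\<lambda>\<omega> t. X (t + r) \<omega>)) (prod_emb UNIV (\<lambda>_. borel) J (Pi\<^sub>E J A))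
      = emeasure (distr M (Pi\<^sub>M J (\<lambda>_. borel)) (\<lambda>\<omega>. \<lambda>j\<in>J. X (j + r) \<omega>)) (Pi\<^sub>E J A)" for r
  proof -
    have "(\<lambda>\<omega>. \<lambda>j\<in>J. X (j + r) \<omega>) \<in> M \<rightarrow>\<^sub>M Pi\<^sub>M J (\<lambda>_. borel)"
      by (rule measurable_restrict) (auto intro: X)
    moreover have "prod_emb UNIV (\<lambda>_. borel) J (Pi\<^sub>E J A) \<in> sets path_space"
      using J A by (intro sets_PiM_I) auto
    moreover have "Pi\<^sub>E J A \<in> sets (Pi\<^sub>M J (\<lambda>_. borel))"
      using J A by (intro sets_PiM_I_finite) auto
    moreover have "(\<lambda>\<omega> t. X (t + r) \<omega>) -` prod_emb UNIV (\<lambda>_. borel) J (Pi\<^sub>E J A) \<inter> space M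
        = (\<lambda>\<omega>. \<lambda>j\<in>J. X (j + r) \<omega>) -` Pi\<^sub>E J A \<inter> space M"
      by (auto simp: prod_emb_def PiE_def extensional_def Pi_def)
    ultimately show ?thesis
      by (simp add: emeasure_distr measurable_shifted_path[where X=X, OF X])
  qed
  show "emeasure (distr M path_space (\<lambda>\<omega> t. X (t + s) \<omega>)) (prod_emb UNIV (\<lambda>_. borel) J (Pi\<^sub>E J A)) =
        emeasure (distr M path_space (\<lambda>\<omega> t. X t \<omega>)) (prod_emb UNIV (\<lambda>_. borel) J (Pi\<^sub>E J A))"
    using cylinder[of s] cylinder[of 0] \<open>stationary M X\<close> J unfolding stationary_def by simp
qed simp_all

lemma stationary_prob_eq:
  assumes "prob_space M" and X: "\<And>t. X t \<in> M \<rightarrow>\<^sub>M borel" and "stationary M X"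
    and B: "B \<in> sets borel"
  shows "measure M {\<omega> \<in> space M. X t \<omega> \<in> B} = measure M {\<omega> \<in> space M. X 0 \<omega> \<in> B}"
proof -
  have B': "{p. p 0 \<in> B} \<in> sets path_space"
    using measurable_sets[OF measurable_component_singleton[of "0::int" UNIV "\<lambda>_. borel"] B]
      by (simp add: vimage_def)
  have law: "measure M {\<omega> \<in> space M. X s \<omega> \<in> B}
      = measure (distr M path_space (\<lambda>\<omega> t. X (t + s) \<omega>)) {p. p 0 \<in> B}" for s
    using measure_distr[OF measurable_shifted_path[where X=X, OF X] B']
      by (simp add: vimage_def Int_def conj_commute)
  show ?thesis
    using law[of t] law[of 0] distr_shifted_path[OF assms(1-3), of t] by simp
qed

lemma mpt_path_shift:
  assumes "prob_space M" and X: "\<And>t. X t \<in> M \<rightarrow>\<^sub>M borel" and "stationary M X"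
    and T: "T = shiftZ \<or> T = shift_back"
  shows "mpt (distr M path_space (\<lambda>\<omega> t. X t \<omega>)) T"
proof -
  let ?\<mu> = "distr M path_space (\<lambda>\<omega> t. X t \<omega>)"
  have distr_eq: "distr ?\<mu> ?\<mu> S = distr ?\<mu> path_space S" for S :: "(int \<Rightarrow> 'b) \<Rightarrow> (int \<Rightarrow> 'b)"
    by (rule distr_cong) simp_all
  have shiftZ: "distr ?\<mu> path_space shiftZ = ?\<mu>"
  proof -
    have "distr ?\<mu> path_space shiftZ = distr M path_space (\<lambda>\<omega> t. X (t + 1) \<omega>)"
      using distr_distr[OF measurable_shiftZ measurable_path[where X=X, OF X]]
        by (simp add: comp_def shiftZ_def)
    then show ?thesis using distr_shifted_path[OF assms(1-3)] by simp
  qed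
  have "distr ?\<mu> path_space shift_back = distr (distr ?\<mu> path_space shiftZ) path_space shift_back"
    using shiftZ by simp
  also have "\<dots> = distr ?\<mu> path_space (shift_back \<circ> shiftZ)"
    by (rule distr_distr[OF measurable_shift_back]) (simp add: measurable_shiftZ)
  also have "\<dots> = ?\<mu>"
    by (simp add: comp_def distr_id2)
  finally have shift_back: "distr ?\<mu> path_space shift_back = ?\<mu>" .
  show ?thesis
  proof (intro mpt.intro mpt_axioms.intro)
    show "prob_space ?\<mu>" by (rule prob_space.prob_space_distr[OF assms(1) measurable_path[where X=X, OF X]])
    show "T \<in> ?\<mu> \<rightarrow>\<^sub>M ?\<mu>"
      using T measurable_shiftZ measurable_shift_back
        by (auto simp: measurable_cong_sets[OF sets_distr sets_distr])
    show "distr ?\<mu> ?\<mu> T = ?\<mu>"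
      using T shiftZ shift_back distr_eq by auto
  qed
qed

lemma inv_sets_vimage_shift:
  assumes I: "I \<in> inv_sets" and T: "T = shiftZ \<or> T = shift_back"
  shows "T -` I = I"
proof -
  have "shiftZ -` I = I" using I by (simp add: inv_sets_def)
  moreover have "shift_back -` I = I"
  proof -
    have "shift_back p \<in> I \<longleftrightarrow> shiftZ (shift_back p) \<in> I" for p
      using \<open>shiftZ -` I = I\<close> by blast
    then show ?thesis by auto
  qed
  ultimately show ?thesis using T by auto
qed

lemma
  fixes X :: "int \<Rightarrow> 'a \<Rightarrow> 'f::topological_space"
  shows space_inv_sigma [simp]: "space (inv_sigma M X) = space M"
    and sets_inv_sigma: "sets (inv_sigma M X)
      = sigma_sets (space M) {{\<omega> \<in> space M. (\<lambda>t. X t \<omega>) \<in> I} | I. I \<in> inv_sets}"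
  unfolding inv_sigma_def by (auto intro!: space_measure_of sets_measure_of)

lemma inv_sigma_setsE:
  fixes X :: "int \<Rightarrow> 'a \<Rightarrow> 'f::topological_space"
  assumes "A \<in> sets (inv_sigma M X)"
  obtains I where "I \<in> inv_sets" "A = {\<omega> \<in> space M. (\<lambda>t. X t \<omega>) \<in> I}"
proof -
  have "\<exists>I\<in>inv_sets. A = {\<omega> \<in> space M. (\<lambda>t. X t \<omega>) \<in> I}"
    using assms unfolding sets_inv_sigma
  proof (induction rule: sigma_sets.induct)
    case Empty
    have "{} \<in> (inv_sets :: (int \<Rightarrow> 'f) set set)" by (simp add: inv_sets_def)
    then show ?case by (intro bexI[of _ "{}"]) auto
  next
    case (Compl a)
    then obtain I where I: "I \<in> inv_sets" "a = {\<omega> \<in> space M. (\<lambda>t. X t \<omega>) \<in> I}" by blast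
    then have "UNIV - I \<in> inv_sets"
      using sets.compl_sets[of I path_space] by (auto simp: inv_sets_def)
    with I show ?case by (intro bexI[of _ "UNIV - I"]) auto
  next
    case (Union a)
    then obtain I where I: "\<And>i. I i \<in> inv_sets" "\<And>i. a i = {\<omega> \<in> space M. (\<lambda>t. X t \<omega>) \<in> I i}"
      by metis
    then have "(\<Union>i. I i) \<in> inv_sets" by (auto simp: inv_sets_def)
    with I show ?case by (intro bexI[of _ "\<Union>i. I i"]) auto
  qed auto
  with that show ?thesis by blast
qed

lemma sigma_finite_subalgebra_inv_sigma:
  fixes X :: "int \<Rightarrow> 'a \<Rightarrow> 'f::topological_space"
  assumes "prob_space M" and X: "\<And>t. X t \<in> M \<rightarrow>\<^sub>M borel"
  shows "sigma_finite_subalgebra M (inv_sigma M X)"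
proof (rule finite_measure_subalgebra_is_sigma_finite)
  have "{{\<omega> \<in> space M. (\<lambda>t. X t \<omega>) \<in> I} | I. I \<in> (inv_sets :: (int \<Rightarrow> 'f) set set)} \<subseteq> sets M"
  proof safe
    fix I :: "(int \<Rightarrow> 'f) set" assume "I \<in> inv_sets"
    then have "I \<in> sets path_space" by (simp add: inv_sets_def)
    from measurable_sets[OF measurable_path[where X=X, OF X] this]
    show "{\<omega> \<in> space M. (\<lambda>t. X t \<omega>) \<in> I} \<in> sets M" by (simp add: vimage_def Int_def conj_commute)
  qed
  then have "sets (inv_sigma M X) \<subseteq> sets M"
    unfolding sets_inv_sigma by (rule sets.sigma_sets_subset)
  then have "subalgebra M (inv_sigma M X)" by (simp add: subalgebra_def)
  then show "finite_measure_subalgebra M (inv_sigma M X)"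
    using prob_space.finite_measure[OF assms(1)]
    by (simp add: finite_measure_subalgebra_def finite_measure_subalgebra_axioms_def)
qed

lemma measurable_inv_sigma_shift_invariant:
  fixes X :: "int \<Rightarrow> 'a \<Rightarrow> 'f::topological_space" and G :: "(int \<Rightarrow> 'f) \<Rightarrow> real"
  assumes G: "G \<in> borel_measurable path_space" and inv: "\<And>p. G (shiftZ p) = G p"
  shows "(\<lambda>\<omega>. G (\<lambda>t. X t \<omega>)) \<in> borel_measurable (inv_sigma M X)"
proof (rule borel_measurableI)
  fix S :: "real set" assume "open S"
  then have "G -` S \<in> sets path_space" using measurable_sets[OF G] by simp
  moreover have "shiftZ -` (G -` S) = G -` S" using inv by auto
  ultimately have "G -` S \<in> inv_sets" by (simp add: inv_sets_def)
  then show "(\<lambda>\<omega>. G (\<lambda>t. X t \<omega>)) -` S \<inter> space (inv_sigma M X) \<in> sets (inv_sigma M X)"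
    unfolding sets_inv_sigma by (intro sigma_sets.Basic) (auto simp: vimage_def Int_def conj_commute)
qed

lemma real_cond_exp_inv_sigma_eqI:
  fixes X :: "int \<Rightarrow> 'a \<Rightarrow> 'f::topological_space" and F G :: "(int \<Rightarrow> 'f) \<Rightarrow> real"
  assumes M: "prob_space M" and X: "\<And>t. X t \<in> M \<rightarrow>\<^sub>M borel"
    and F: "F \<in> borel_measurable path_space" "\<And>p. \<bar>F p\<bar> \<le> K"
    and G: "G \<in> borel_measurable path_space" "\<And>p. \<bar>G p\<bar> \<le> K" "\<And>p. G (shiftZ p) = G p"
    and eq: "\<And>I. I \<in> inv_sets \<Longrightarrow> (\<integral>p. indicator I p * G p \<partial>distr M path_space (\<lambda>\<omega> t. X t \<omega>))
      = (\<integral>p. indicator I p * F p \<partial>distr M path_space (\<lambda>\<omega> t. X t \<omega>))"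
  shows "AE \<omega> in M. real_cond_exp M (inv_sigma M X) (\<lambda>\<omega>. F (\<lambda>t. X t \<omega>)) \<omega> = G (\<lambda>t. X t \<omega>)"
proof -
  interpret prob_space M by (rule M)
  interpret S: sigma_finite_subalgebra M "inv_sigma M X"
    by (rule sigma_finite_subalgebra_inv_sigma[OF M X])
  have path: "(\<lambda>\<omega> t. X t \<omega>) \<in> M \<rightarrow>\<^sub>M path_space" by (rule measurable_path[where X=X, OF X])
  have on_path: "(\<integral>\<omega>\<in>A. H (\<lambda>t. X t \<omega>) \<partial>M) = (\<integral>p. indicator I p * H p \<partial>distr M path_space (\<lambda>\<omega> t. X t \<omega>))"
    if I: "I \<in> inv_sets" and A: "A = {\<omega> \<in> space M. (\<lambda>t. X t \<omega>) \<in> I}"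
      and H [measurable]: "H \<in> borel_measurable path_space" for A I and H :: "(int \<Rightarrow> 'f) \<Rightarrow> real"
  proof -
    have [measurable]: "I \<in> sets path_space" using I by (simp add: inv_sets_def)
    have "(\<integral>\<omega>\<in>A. H (\<lambda>t. X t \<omega>) \<partial>M) = (\<integral>\<omega>. indicator I (\<lambda>t. X t \<omega>) * H (\<lambda>t. X t \<omega>) \<partial>M)"
      unfolding set_lebesgue_integral_def A
        by (intro Bochner_Integration.integral_cong) (auto simp: indicator_def)
    also have "\<dots> = (\<integral>p. indicator I p * H p \<partial>distr M path_space (\<lambda>\<omega> t. X t \<omega>))"
      by (rule integral_distr[symmetric, OF path]) measurable
    finally show ?thesis .
  qed
  show ?thesis
  proof (rule S.real_cond_exp_charact)
    show "integrable M (\<lambda>\<omega>. F (\<lambda>t. X t \<omega>))"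
      by (rule integrable_abs_bounded[OF measurable_comp[OF path F(1), unfolded comp_def] F(2)])
    show "integrable M (\<lambda>\<omega>. G (\<lambda>t. X t \<omega>))"
      by (rule integrable_abs_bounded[OF measurable_comp[OF path G(1), unfolded comp_def] G(2)])
    show "(\<lambda>\<omega>. G (\<lambda>t. X t \<omega>)) \<in> borel_measurable (inv_sigma M X)"
      by (rule measurable_inv_sigma_shift_invariant[OF G(1) G(3)])
    fix A assume "A \<in> sets (inv_sigma M X)"
    then obtain I where "I \<in> inv_sets" "A = {\<omega> \<in> space M. (\<lambda>t. X t \<omega>) \<in> I}"
      by (rule inv_sigma_setsE)
    then show "(\<integral>\<omega>\<in>A. F (\<lambda>t. X t \<omega>) \<partial>M) = (\<integral>\<omega>\<in>A. G (\<lambda>t. X t \<omega>) \<partial>M)"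
      using on_path[of I A F] on_path[of I A G] F(1) G(1) eq by simp
  qed
qed

text \<open>Birkhoff's theorem for the shift and for its inverse: both have the invariant sets
  \<^const>\<open>inv_sets\<close>, so both limits are the conditional expectation given \<^const>\<open>inv_sigma\<close>.
  Averaging \<open>F \<circ> T\<close> (times \<open>1..n\<close>) matches the backward averages of the theorem.\<close>

lemma ergodic_average_path:
  fixes X :: "int \<Rightarrow> 'a \<Rightarrow> 'f::topological_space" and F :: "(int \<Rightarrow> 'f) \<Rightarrow> real"
  assumes M: "prob_space M" and X: "\<And>t. X t \<in> M \<rightarrow>\<^sub>M borel" and st: "stationary M X"
    and F: "F \<in> borel_measurable path_space" and bound: "\<And>p. \<bar>F p\<bar> \<le> K"
    and T: "T = shiftZ \<or> T = shift_back"
  shows "AE \<omega> in M. (\<lambda>n. birkhoff_sum T (\<lambda>p. F (T p)) n (\<lambda>t. X t \<omega>) / n)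
      \<longlonglongrightarrow> real_cond_exp M (inv_sigma M X) (\<lambda>\<omega>. F (\<lambda>t. X t \<omega>)) \<omega>"
proof -
  let ?\<mu> = "distr M path_space (\<lambda>\<omega> t. X t \<omega>)"
  interpret mpt ?\<mu> T by (rule mpt_path_shift[OF M X st T])
  have path: "(\<lambda>\<omega> t. X t \<omega>) \<in> M \<rightarrow>\<^sub>M path_space" by (rule measurable_path[where X=X, OF X])
  have T_meas: "T \<in> path_space \<rightarrow>\<^sub>M path_space"
    using T measurable_shiftZ measurable_shift_back by auto
  have FT: "(\<lambda>p. F (T p)) \<in> borel_measurable ?\<mu>"
    using measurable_comp[OF T_meas F] by (simp add: comp_def)
  have FT_bound: "\<bar>F (T p)\<bar> \<le> K" for p by (rule bound)
  define G where "G p = real_of_ereal (birkhoff_limsup T (\<lambda>p. F (T p)) p)" for p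
  have G_meas: "G \<in> borel_measurable path_space"
    using measurable_birkhoff_limsup(1)[OF measurable_T FT] unfolding G_def[abs_def] by simp
  have G_bound: "\<bar>G p\<bar> \<le> K" for p
    unfolding G_def by (rule abs_real_of_birkhoff_limsup_le[where f="\<lambda>p. F (T p)", OF FT_bound])
  have G_T: "G (T p) = G p" for p
    unfolding G_def by (simp add: birkhoff_limsup_T[where f="\<lambda>p. F (T p)", OF FT_bound])
  have G_shiftZ: "G (shiftZ p) = G p" for p
    using T G_T[of "shiftZ p"] G_T[of p] by auto
  have "(\<integral>p. indicator I p * G p \<partial>?\<mu>) = (\<integral>p. indicator I p * F p \<partial>?\<mu>)" if I: "I \<in> inv_sets" for I
  proof -
    have inv: "T -` I = I" by (rule inv_sets_vimage_shift[OF I T])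
    have [measurable]: "I \<in> sets path_space" using I by (simp add: inv_sets_def)
    have "(\<integral>p. indicator I p * G p \<partial>?\<mu>) = (\<integral>p. indicator I p * F (T p) \<partial>?\<mu>)"
      unfolding G_def using inv
      by (intro birkhoff_limsup_integral_invariant[where f="\<lambda>p. F (T p)", OF FT FT_bound]) auto
    also have "\<dots> = (\<integral>p. indicator I p * F p \<partial>?\<mu>)"
      using inv by (intro integral_indicator_comp_T) (use F in auto)
    finally show ?thesis .
  qed
  then have "AE \<omega> in M. real_cond_exp M (inv_sigma M X) (\<lambda>\<omega>. F (\<lambda>t. X t \<omega>)) \<omega> = G (\<lambda>t. X t \<omega>)"
    by (intro real_cond_exp_inv_sigma_eqI[OF M X F bound G_meas G_bound G_shiftZ])
  moreover have "AE p in ?\<mu>. (\<lambda>n. birkhoff_sum T (\<lambda>p. F (T p)) n p / n) \<longlonglongrightarrow> G p"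
    unfolding G_def by (rule birkhoff_AE[OF FT FT_bound])
  then have "AE \<omega> in M. (\<lambda>n. birkhoff_sum T (\<lambda>p. F (T p)) n (\<lambda>t. X t \<omega>) / n) \<longlonglongrightarrow> G (\<lambda>t. X t \<omega>)"
    by (rule AE_distrD[OF path])
  ultimately show ?thesis by eventually_elim simp
qed

lemma measurable_xi:
  assumes "\<And>t. X t \<in> M \<rightarrow>\<^sub>M borel"
  shows "xi X s \<in> M \<rightarrow>\<^sub>M Pi\<^sub>M UNIV (\<lambda>_. borel)"
  unfolding xi_def by (rule measurable_PiM_single') (auto intro: assms)

theorem AE_xi_averages:
  fixes X :: "int \<Rightarrow> 'a \<Rightarrow> 'f::topological_space"
  assumes M: "prob_space M" and X: "\<And>t. X t \<in> M \<rightarrow>\<^sub>M borel" and st: "stationary M X"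
    and S: "Measurable.pred (Pi\<^sub>M UNIV (\<lambda>_::nat. borel)) (\<lambda>x. x \<in> S)"
  defines "\<rho> \<equiv> real_cond_exp M (inv_sigma M X) (\<lambda>\<omega>. indicator S (xi X 0 \<omega>))"
  shows "AE \<omega> in M.
     (\<lambda>n. (1 / real n) * (\<Sum>i=0..n. indicator S (xi X (int i) \<omega>))) \<longlonglongrightarrow> \<rho> \<omega> \<and>
     (\<lambda>n. (1 / real n) * (\<Sum>i=1..n. indicator S (xi X (- int i) \<omega>))) \<longlonglongrightarrow> \<rho> \<omega>"
proof -
  define F where "F p = (indicator S (\<lambda>j. p (- int j)) :: real)" for p :: "int \<Rightarrow> 'f"
  have "(\<lambda>p j. p (- int j)) \<in> path_space \<rightarrow>\<^sub>M Pi\<^sub>M UNIV (\<lambda>_::nat. borel :: 'f measure)"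
    by (rule measurable_PiM_single') (auto intro: measurable_component_singleton)
  then have F_meas: "F \<in> borel_measurable path_space"
    unfolding F_def using S by (simp add: measurable_comp[unfolded comp_def])
  have F_bound: "\<bar>F p\<bar> \<le> 1" for p by (simp add: F_def)
  have F_path: "F (\<lambda>t. X t \<omega>) = indicator S (xi X 0 \<omega>)" for \<omega>
    by (simp add: F_def xi_def)
  have forward: "F ((shiftZ ^^ i) (\<lambda>t. X t \<omega>)) = indicator S (xi X (int i) \<omega>)" for i \<omega>
    by (simp add: F_def xi_def funpow_shiftZ algebra_simps)
  have backward: "F ((shift_back ^^ i) (\<lambda>t. X t \<omega>)) = indicator S (xi X (- int i) \<omega>)" for i \<omega>
  proof -
    have "(\<lambda>j. X (- int j - int i) \<omega>) = xi X (- int i) \<omega>"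
      unfolding xi_def by (intro ext arg_cong[where f="\<lambda>t. X t \<omega>"]) simp
    then show ?thesis by (simp add: F_def funpow_shift_back)
  qed
  have "AE \<omega> in M. (\<lambda>n. (\<Sum>i=1..n. indicator S (xi X (int i) \<omega>)) / n) \<longlonglongrightarrow> \<rho> \<omega>"
    using ergodic_average_path[OF M X st F_meas F_bound, of shiftZ]
    by (simp add: birkhoff_sum_comp_T forward F_path \<rho>_def)
  moreover have "AE \<omega> in M. (\<lambda>n. (\<Sum>i=1..n. indicator S (xi X (- int i) \<omega>)) / n) \<longlonglongrightarrow> \<rho> \<omega>"
    using ergodic_average_path[OF M X st F_meas F_bound, of shift_back]
    by (simp add: birkhoff_sum_comp_T backward F_path \<rho>_def)
  ultimately show ?thesis
  proof eventually_elim
    case (elim \<omega>)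
    have "(\<lambda>n. indicator S (xi X 0 \<omega>) / real n + (\<Sum>i=1..n. indicator S (xi X (int i) \<omega>)) / n) \<longlonglongrightarrow> 0 + \<rho> \<omega>"
      by (intro tendsto_add lim_const_over_n elim(1))
    then show ?case
      using elim(2) by (simp add: sum.atLeast_Suc_atMost[of 0] add_divide_distrib)
  qed
qed

lemma (in sigma_finite_subalgebra) real_cond_exp_pos_where_pos:
  assumes f: "integrable M f" and nonneg: "\<And>x. 0 \<le> f x"
  shows "AE x in M. 0 < f x \<longrightarrow> 0 < real_cond_exp M F f x"
proof -
  define K where "K = {x \<in> space M. real_cond_exp M F f x \<le> 0}"
  have [measurable]: "real_cond_exp M F f \<in> borel_measurable F" by (rule borel_measurable_cond_exp)
  have space_F: "space F = space M" using subalg by (simp add: subalgebra_def)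
  have K_F: "K \<in> sets F" unfolding K_def space_F[symmetric] by measurable
  then have K_M: "K \<in> sets M" using subalg by (auto simp: subalgebra_def)
  have "0 \<le> (\<integral>x. - (indicator K x * real_cond_exp M F f x) \<partial>M)"
    by (intro integral_nonneg_AE AE_I2) (auto simp: K_def indicator_def)
  moreover have "(\<integral>x. indicator K x * f x \<partial>M) = (\<integral>x. indicator K x * real_cond_exp M F f x \<partial>M)"
    using real_cond_exp_intA[OF f K_F] by (simp add: set_lebesgue_integral_def)
  ultimately have "(\<integral>x. indicator K x * f x \<partial>M) \<le> 0" by simp
  then have "(\<integral>x. indicator K x * f x \<partial>M) = 0"
    using nonneg by (intro antisym integral_nonneg_AE AE_I2) auto
  moreover have "integrable M (\<lambda>x. indicator K x * f x)"
    using integrable_mult_indicator[OF K_M f] by simp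
  ultimately have "AE x in M. indicator K x * f x = 0"
    using nonneg by (subst integral_nonneg_eq_0_iff_AE[symmetric]) auto
  with AE_space show ?thesis
    by eventually_elim (auto simp: K_def indicator_def not_le split: if_splits)
qed

lemma AE_cond_prob_xi_pos:
  fixes X :: "int \<Rightarrow> 'a \<Rightarrow> 'f::topological_space"
  assumes M: "prob_space M" and X: "\<And>t. X t \<in> M \<rightarrow>\<^sub>M borel"
    and S_meas [measurable]: "Measurable.pred (Pi\<^sub>M UNIV (\<lambda>_::nat. borel)) (\<lambda>x. x \<in> S)"
  shows "AE \<omega> in M. xi X 0 \<omega> \<in> S \<longrightarrow>
    0 < real_cond_exp M (inv_sigma M X) (\<lambda>\<omega>. indicator S (xi X 0 \<omega>)) \<omega>"
proof -
  interpret prob_space M by (rule M)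
  interpret Sub: sigma_finite_subalgebra M "inv_sigma M X"
    by (rule sigma_finite_subalgebra_inv_sigma[OF M X])
  have [measurable]: "xi X 0 \<in> M \<rightarrow>\<^sub>M Pi\<^sub>M UNIV (\<lambda>_::nat. borel)"
    by (rule measurable_xi[where X=X, OF X])
  have "(\<lambda>\<omega>. indicator S (xi X 0 \<omega>) :: real) = (\<lambda>\<omega>. if xi X 0 \<omega> \<in> S then 1 else 0)"
    by (simp add: indicator_def of_bool_def)
  also have "\<dots> \<in> borel_measurable M" by measurable
  finally have "integrable M (\<lambda>\<omega>. indicator S (xi X 0 \<omega>) :: real)"
    by (rule integrable_abs_bounded[where B=1]) simp
  from Sub.real_cond_exp_pos_where_pos[OF this indicator_pos_le] show ?thesis
    by eventually_elim (simp add: indicator_def)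
qed

section \<open>Geometric contraction along the past\<close>

lemma suminf_count_less_le:
  fixes z :: real
  shows "(\<Sum>i. of_bool (real i < z) :: ennreal) \<le> ennreal (max z 0 + 1)"
proof -
  define N where "N = nat \<lceil>z\<rceil>"
  have "(\<Sum>i. of_bool (real i < z) :: ennreal) = (\<Sum>i<N. of_bool (real i < z) :: ennreal)"
  proof (rule suminf_finite)
    fix i assume "i \<notin> {..<N}"
    then have "z \<le> real i" by (simp add: N_def not_less)
    then show "of_bool (real i < z) = (0 :: ennreal)" by simp
  qed simp
  also have "\<dots> \<le> (\<Sum>i<N. 1 :: ennreal)" by (intro sum_mono) auto
  also have "\<dots> = ennreal (real N)" by (simp add: ennreal_of_nat_eq_real_of_nat)
  also have "\<dots> \<le> ennreal (max z 0 + 1)" unfolding N_def by (intro ennreal_leI) linarith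
  finally show ?thesis .
qed

lemma (in prob_space) AE_eventually_le_linear:
  fixes Y :: "nat \<Rightarrow> 'a \<Rightarrow> real" and \<epsilon> :: real
  assumes Y [measurable]: "\<And>i. Y i \<in> borel_measurable M" and nonneg: "\<And>i x. 0 \<le> Y i x"
    and ident: "\<And>i c. prob {x \<in> space M. c < Y i x} = prob {x \<in> space M. c < Y 0 x}"
    and int: "integrable M (Y 0)" and eps: "0 < \<epsilon>"
  shows "AE x in M. \<forall>\<^sub>F i in sequentially. Y i x \<le> \<epsilon> * i"
proof -
  \<comment> \<open>Borel--Cantelli, with \<open>\<Sum>i. P(Y\<^sub>i > \<epsilon> i) \<le> E Y\<^sub>0 / \<epsilon> + 1\<close>.\<close>
  define A where "A i = {x \<in> space M. \<epsilon> * i < Y i x}" for i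
  have [measurable]: "A i \<in> sets M" for i unfolding A_def by measurable
  have "prob (A i) = prob {x \<in> space M. \<epsilon> * i < Y 0 x}" for i
    unfolding A_def by (rule ident)
  then have "(\<Sum>i. ennreal (prob (A i))) = (\<Sum>i. \<integral>\<^sup>+x. indicator {x \<in> space M. \<epsilon> * i < Y 0 x} x \<partial>M)"
    by (simp add: emeasure_eq_measure)
  also have "\<dots> = (\<integral>\<^sup>+x. (\<Sum>i. indicator {x \<in> space M. \<epsilon> * i < Y 0 x} x) \<partial>M)"
    by (rule nn_integral_suminf[symmetric]) simp
  also have "\<dots> \<le> (\<integral>\<^sup>+x. ennreal (Y 0 x / \<epsilon> + 1) \<partial>M)"
  proof (rule nn_integral_mono)
    fix x assume "x \<in> space M"
    then have "(\<Sum>i. indicator {x \<in> space M. \<epsilon> * i < Y 0 x} x)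
        = (\<Sum>i. of_bool (real i < Y 0 x / \<epsilon>) :: ennreal)"
      using eps by (simp add: indicator_def field_simps)
    also have "\<dots> \<le> ennreal (Y 0 x / \<epsilon> + 1)"
      using suminf_count_less_le[of "Y 0 x / \<epsilon>"] nonneg[of 0 x] eps by simp
    finally show "(\<Sum>i. indicator {x \<in> space M. \<epsilon> * i < Y 0 x} x) \<le> ennreal (Y 0 x / \<epsilon> + 1)" .
  qed
  also have "\<dots> = ennreal (\<integral>x. Y 0 x / \<epsilon> + 1 \<partial>M)"
    using int nonneg eps by (intro nn_integral_eq_integral) auto
  finally have "summable (\<lambda>i. prob (A i))"
    by (intro summable_suminf_not_top) (auto simp: top_unique)
  then have "AE x in M. \<forall>\<^sub>F i in sequentially. x \<in> space M - A i"
    by (intro borel_cantelli_AE1) (auto simp: emeasure_eq_measure)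
  then show ?thesis
    by (rule AE_mp) (auto simp: A_def not_less elim!: eventually_mono)
qed

lemma AE_subexponential:
  fixes X :: "int \<Rightarrow> 'a \<Rightarrow> 'f::topological_space" and b :: "'f \<Rightarrow> real"
  assumes M: "prob_space M" and X: "\<And>t. X t \<in> M \<rightarrow>\<^sub>M borel" and st: "stationary M X"
    and b [measurable]: "b \<in> borel_measurable borel" and int: "integrable M (\<lambda>\<omega>. logp (b (X 0 \<omega>)))"
  shows "AE \<omega> in M. \<forall>q>1. \<forall>\<^sub>F i in sequentially. b (X (- int i) \<omega>) \<le> q ^ i"
proof -
  interpret prob_space M by (rule M)
  have [measurable]: "X t \<in> borel_measurable M" for t by (rule X)
  have [measurable]: "logp \<in> borel_measurable borel" unfolding logp_def by measurable
  have "AE \<omega> in M. \<forall>m. \<forall>\<^sub>F i in sequentially. logp (b (X (- int i) \<omega>)) \<le> 1 / Suc m * i"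
  proof (subst AE_all_countable, intro allI)
    fix m :: nat
    show "AE \<omega> in M. \<forall>\<^sub>F i in sequentially. logp (b (X (- int i) \<omega>)) \<le> 1 / Suc m * i"
    proof (rule AE_eventually_le_linear[where Y="\<lambda>i \<omega>. logp (b (X (- int i) \<omega>))"])
      fix i :: nat and c :: real
      have "{y. c < logp (b y)} \<in> sets borel" by measurable
      from stationary_prob_eq[where X=X, OF M X st this, of "- int i"]
      show "prob {\<omega> \<in> space M. c < logp (b (X (- int i) \<omega>))}
        = prob {\<omega> \<in> space M. c < logp (b (X (- int 0) \<omega>))}"
        by simp
    qed (use int in \<open>auto simp: logp_def\<close>)
  qed
  then show ?thesis
  proof (rule AE_mp, intro AE_I2 impI allI)
    fix \<omega> and q :: real
    assume lin: "\<forall>m. \<forall>\<^sub>F i in sequentially. logp (b (X (- int i) \<omega>)) \<le> 1 / Suc m * i" and "1 < q"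
    then obtain m where m: "inverse (real (Suc m)) < ln q" using reals_Archimedean[of "ln q"] by auto
    from lin[rule_format, of m] show "\<forall>\<^sub>F i in sequentially. b (X (- int i) \<omega>) \<le> q ^ i"
    proof eventually_elim
      case (elim i)
      have "b (X (- int i) \<omega>) \<le> exp (logp (b (X (- int i) \<omega>)))" by (simp add: logp_def)
      also have "\<dots> \<le> exp (i * ln q)"
        using elim order_trans[OF _ mult_left_mono[OF less_imp_le[OF m]]] by (simp add: field_simps)
      also have "\<dots> = q ^ i" using \<open>1 < q\<close> by (simp add: exp_of_nat_mult)
      finally show ?case .
    qed
  qed
qed

lemma eventually_le_geometric_of_limsup_root:
  fixes P :: "nat \<Rightarrow> real"
  assumes nonneg: "\<And>n. 0 \<le> P n" and lim: "limsup (\<lambda>n. ereal (root n (P n))) < 1"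
  obtains r where "0 < r" "r < 1" "\<forall>\<^sub>F n in sequentially. P n \<le> r ^ n"
proof -
  obtain r0 where r0: "limsup (\<lambda>n. ereal (root n (P n))) < ereal r0" "ereal r0 < 1"
    using ereal_dense2[OF lim] by blast
  define r where "r = max r0 (1/2)"
  have r: "0 < r" "r < 1" using r0(2) by (auto simp: r_def)
  have "limsup (\<lambda>n. ereal (root n (P n))) < ereal r"
    using r0(1) by (rule order.strict_trans2) (simp add: r_def)
  then have "\<forall>\<^sub>F n in sequentially. ereal (root n (P n)) < ereal r" by (rule Limsup_lessD)
  with eventually_gt_at_top[of 0] have "\<forall>\<^sub>F n in sequentially. P n \<le> r ^ n"
  proof eventually_elim
    case (elim n)
    have "P n = root n (P n) ^ n" using elim nonneg[of n] by simp
    also have "\<dots> \<le> r ^ n" using elim nonneg[of n] by (intro power_mono) auto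
    finally show ?case .
  qed
  with r show ?thesis by (rule that)
qed

lemma summable_geometric_times_subexponential:
  fixes P c :: "nat \<Rightarrow> real"
  assumes r: "0 < r" "r < 1" and P: "\<forall>\<^sub>F n in sequentially. P n \<le> r ^ n" and P0: "\<And>n. 0 \<le> P n"
    and c0: "\<And>n. 0 \<le> c n" and c: "\<forall>q>1. \<forall>\<^sub>F n in sequentially. c n \<le> q ^ n"
  shows "summable (\<lambda>n. P n * c (Suc n))"
proof -
  define q where "q = (1 + r) / (2 * r)"
  have q: "1 < q" using r by (simp add: q_def field_simps)
  have rq: "r * q = (1 + r) / 2" using r by (simp add: q_def field_simps)
  have "\<forall>\<^sub>F n in sequentially. c (Suc n) \<le> q ^ Suc n"
    using eventually_sequentially_Suc[of "\<lambda>n. c n \<le> q ^ n"] c q by blast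
  with P have "\<forall>\<^sub>F n in sequentially. norm (P n * c (Suc n)) \<le> q * ((1 + r) / 2) ^ n"
  proof eventually_elim
    case (elim n)
    have "norm (P n * c (Suc n)) \<le> r ^ n * q ^ Suc n"
      using elim P0[of n] c0[of "Suc n"] r by (simp add: mult_mono)
    also have "\<dots> = q * (r * q) ^ n" by (simp add: power_mult_distrib)
    finally show ?case by (simp add: rq)
  qed
  then show ?thesis
    by (rule summable_comparison_test_ev) (use r in \<open>intro summable_mult summable_geometric, simp\<close>)
qed

lemma ex_A1_if_summable:
  fixes x :: "nat \<Rightarrow> 'f" and lam b :: "'f \<Rightarrow> real"
  assumes lam: "\<And>y. 0 \<le> lam y" and b: "\<And>y. 0 \<le> b y"
    and small: "\<forall>\<^sub>F n in sequentially. (\<Prod>i=1..n. lam (x i)) \<le> 1/2"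
    and summ: "summable (\<lambda>i. (\<Prod>k=1..i+1. lam (x k)) * b (x (i + 2)))"
  shows "\<exists>C1\<ge>1. x \<in> A1 lam b C1"
proof -
  define tot where "tot = b (x 1) + (\<Sum>i. (\<Prod>k=1..i+1. lam (x k)) * b (x (i + 2)))"
  have terms: "0 \<le> (\<Prod>k=1..i+1. lam (x k)) * b (x (i + 2))" for i
    using lam b by (simp add: prod_nonneg)
  have series: "ennreal (b (x 1)) + (\<Sum>i. ennreal ((\<Prod>k=1..i+1. lam (x k)) * b (x (i + 2))))
      = ennreal tot"
    unfolding tot_def suminf_ennreal2[OF terms summ] using b suminf_nonneg[OF summ terms]
    by (simp add: ennreal_plus)
  obtain N where N: "\<And>n. N \<le> n \<Longrightarrow> (\<Prod>i=1..n. lam (x i)) \<le> 1/2"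
    using small by (auto simp: eventually_sequentially)
  define C1 where "C1 = max (max N 2) (nat \<lceil>tot\<rceil>)"
  have "2 \<le> C1" by (simp add: C1_def)
  moreover have "(\<Prod>i=1..j. lam (x i)) \<le> 1 - 1 / real C1" if "C1 \<le> j" for j
  proof -
    have "(\<Prod>i=1..j. lam (x i)) \<le> 1/2" using N that by (simp add: C1_def)
    moreover have "1 / real C1 \<le> 1/2" using \<open>2 \<le> C1\<close> by (simp add: field_simps)
    ultimately show ?thesis by linarith
  qed
  moreover have "tot \<le> real C1" unfolding C1_def by linarith
  ultimately show ?thesis
    unfolding A1_def using series by (intro exI[of _ C1]) (auto intro: ennreal_leI)
qed

lemma ex_A1_if_contracting:
  fixes x :: "nat \<Rightarrow> 'f" and lam b :: "'f \<Rightarrow> real"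
  assumes lam: "\<And>y. 0 \<le> lam y" and b: "\<And>y. 0 \<le> b y"
    and contr: "limsup (\<lambda>n. ereal (root n (\<Prod>i=1..n. lam (x i)))) < 1"
    and sub: "\<forall>q>1. \<forall>\<^sub>F i in sequentially. b (x i) \<le> q ^ i"
  shows "\<exists>C1\<ge>1. x \<in> A1 lam b C1"
proof (rule ex_A1_if_summable[OF lam b])
  define P where "P n = (\<Prod>i=1..n. lam (x i))" for n
  have P0: "0 \<le> P n" for n unfolding P_def using lam by (simp add: prod_nonneg)
  obtain r where r: "0 < r" "r < 1" and P_le: "\<forall>\<^sub>F n in sequentially. P n \<le> r ^ n"
    using eventually_le_geometric_of_limsup_root[of P] P0 contr unfolding P_def by blast
  have "summable (\<lambda>n. P n * b (x (Suc n)))"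
    by (rule summable_geometric_times_subexponential[OF r P_le P0 b sub])
  from summable_ignore_initial_segment[OF this, of 1]
  show "summable (\<lambda>i. (\<Prod>k=1..i+1. lam (x k)) * b (x (i + 2)))"
    by (simp only: P_def Suc_eq_plus1 add.assoc one_add_one)
  have "\<forall>\<^sub>F n in sequentially. r ^ n < 1/2"
    using LIMSEQ_power_zero[of r] r by (intro order_tendstoD(2)) auto
  with P_le show "\<forall>\<^sub>F n in sequentially. (\<Prod>i=1..n. lam (x i)) \<le> 1/2"
    by eventually_elim (simp add: P_def)
qed

lemma AE_xi_in_A1:
  fixes X :: "int \<Rightarrow> 'a \<Rightarrow> 'f::topological_space" and lam b :: "'f \<Rightarrow> real"
  assumes M: "prob_space M" and X: "\<And>t. X t \<in> M \<rightarrow>\<^sub>M borel" and st: "stationary M X"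
    and lam: "\<And>y. 0 \<le> lam y" and b: "\<And>y. 0 \<le> b y" and b_meas: "b \<in> borel_measurable borel"
    and b_log: "integrable M (\<lambda>\<omega>. logp (b (X 0 \<omega>)))"
    and contr: "AE \<omega> in M. limsup (\<lambda>n. ereal (root n (\<Prod>i=1..n. lam (X (- int i) \<omega>)))) < 1"
  shows "AE \<omega> in M. \<exists>C1\<ge>1. xi X 0 \<omega> \<in> A1 lam b C1"
  using contr AE_subexponential[where X=X, OF M X st b_meas b_log]
proof eventually_elim
  case (elim \<omega>)
  then show ?case
    using ex_A1_if_contracting[where x="xi X 0 \<omega>" and lam=lam and b=b, OF lam b] by (simp add: xi_def)
qed

section \<open>The sets \<open>A\<^sub>C\<close> and the random index \<open>C\<close>\<close>

lemma measurable_A1: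
  fixes lam b :: "'f::topological_space \<Rightarrow> real"
  assumes [measurable]: "lam \<in> borel_measurable borel" "b \<in> borel_measurable borel"
  shows "Measurable.pred (Pi\<^sub>M UNIV (\<lambda>_::nat. borel)) (\<lambda>x. x \<in> A1 lam b C1)"
  unfolding A1_def by measurable

lemma measurable_AC:
  fixes lam b :: "'f::topological_space \<Rightarrow> real" and eta :: "real \<Rightarrow> 'f \<Rightarrow> real"
  assumes [measurable]: "lam \<in> borel_measurable borel" "b \<in> borel_measurable borel"
    and eta: "(\<lambda>(r, x). eta r x) \<in> borel_measurable (restrict_space borel {0<..} \<Otimes>\<^sub>M borel)"
    and "1 \<le> C1"
  shows "Measurable.pred (Pi\<^sub>M UNIV (\<lambda>_::nat. borel)) (\<lambda>x. x \<in> AC lam b eta C1 C2)"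
proof -
  define r where "r = 2 * real C1 * (2 * real C1 + 1)"
  have "(\<lambda>y::'f. (r, y)) \<in> borel \<rightarrow>\<^sub>M restrict_space borel {0<..} \<Otimes>\<^sub>M borel"
    using \<open>1 \<le> C1\<close> by (intro measurable_Pair measurable_const) (auto simp: r_def space_restrict_space)
  from measurable_comp[OF this eta]
  have [measurable]: "eta r \<in> borel_measurable borel" by (simp add: comp_def)
  have [measurable]: "Measurable.pred (Pi\<^sub>M UNIV (\<lambda>_::nat. borel)) (\<lambda>x. x \<in> A1 lam b C1)"
    by (rule measurable_A1) measurable
  show ?thesis unfolding AC_def A2_def r_def[symmetric] by measurable
qed

lemma ex_A2:
  assumes "0 < eta (2 * real C1 * (2 * real C1 + 1)) (x 0)"
  shows "\<exists>C2\<ge>1. x \<in> A2 eta C1 C2"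
proof -
  define e where "e = eta (2 * real C1 * (2 * real C1 + 1)) (x 0)"
  define C2 where "C2 = nat \<lceil>1 / e\<rceil> + 1"
  have "1 / e \<le> real C2" unfolding C2_def by linarith
  then have "1 / (real C2 + 1) \<le> e"
    using assms by (simp add: e_def field_simps)
  then show ?thesis unfolding A2_def e_def by (intro exI[of _ C2]) (simp add: C2_def)
qed

lemma measurable_select_positive_pair:
  fixes \<rho> :: "nat \<Rightarrow> nat \<Rightarrow> 'a \<Rightarrow> real"
  assumes [measurable]: "\<And>m n. \<rho> m n \<in> borel_measurable M"
  obtains C1 C2 :: "'a \<Rightarrow> nat"
  where "C1 \<in> M \<rightarrow>\<^sub>M count_space UNIV" "C2 \<in> M \<rightarrow>\<^sub>M count_space UNIV" "\<And>\<omega>. 1 \<le> C1 \<omega> \<and> 1 \<le> C2 \<omega>"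
    "\<And>\<omega>. \<exists>m\<ge>1. \<exists>n\<ge>1. 0 < \<rho> m n \<omega> \<Longrightarrow> 0 < \<rho> (C1 \<omega>) (C2 \<omega>) \<omega>"
proof -
  \<comment> \<open>Off the event where a positive pair exists, \<open>Q\<close> is relaxed so that \<open>LEAST\<close> is always attained.\<close>
  define Q where "Q k \<omega> \<longleftrightarrow> 1 \<le> fst (prod_decode k) \<and> 1 \<le> snd (prod_decode k) \<and>
      ((\<exists>m\<ge>1. \<exists>n\<ge>1. 0 < \<rho> m n \<omega>) \<longrightarrow> 0 < \<rho> (fst (prod_decode k)) (snd (prod_decode k)) \<omega>)" for k \<omega>
  define K where "K \<omega> = (LEAST k. Q k \<omega>)" for \<omega>
  have [measurable]: "Measurable.pred M (Q k)" for k unfolding Q_def by measurable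
  have K: "K \<in> M \<rightarrow>\<^sub>M count_space UNIV" unfolding K_def by measurable
  have "Q (K \<omega>) \<omega>" for \<omega>
  proof -
    have "\<exists>k. Q k \<omega>"
    proof (cases "\<exists>m\<ge>1. \<exists>n\<ge>1. 0 < \<rho> m n \<omega>")
      case True
      then obtain m n where "1 \<le> m" "1 \<le> n" "0 < \<rho> m n \<omega>" by blast
      then show ?thesis by (intro exI[of _ "prod_encode (m, n)"]) (simp add: Q_def)
    next
      case False
      then show ?thesis by (intro exI[of _ "prod_encode (1, 1)"]) (simp add: Q_def)
    qed
    then show ?thesis unfolding K_def by (rule LeastI_ex)
  qed
  moreover have "(\<lambda>\<omega>. f (K \<omega>)) \<in> M \<rightarrow>\<^sub>M count_space UNIV" for f :: "nat \<Rightarrow> nat"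
    using measurable_comp[OF K, of f] by (simp add: comp_def)
  ultimately show ?thesis
    by (intro that[of "\<lambda>\<omega>. fst (prod_decode (K \<omega>))" "\<lambda>\<omega>. snd (prod_decode (K \<omega>))"]) (auto simp: Q_def)
qed

lemma AE_AC_averages:
  fixes X :: "int \<Rightarrow> 'a \<Rightarrow> 'f::topological_space" and lam b :: "'f \<Rightarrow> real"
    and eta :: "real \<Rightarrow> 'f \<Rightarrow> real"
  assumes M: "prob_space M" and X: "\<And>t. X t \<in> M \<rightarrow>\<^sub>M borel" and st: "stationary M X"
    and lam: "lam \<in> borel_measurable borel" and b: "b \<in> borel_measurable borel"
    and eta: "(\<lambda>(r, x). eta r x) \<in> borel_measurable (restrict_space borel {0<..} \<Otimes>\<^sub>M borel)"
  shows "AE \<omega> in M. \<forall>C1 C2. 1 \<le> C1 \<longrightarrow>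
    (\<lambda>n. (1 / real n) * (\<Sum>i=0..n. indicator (AC lam b eta C1 C2) (xi X (int i) \<omega>)))
      \<longlonglongrightarrow> rhoC M X lam b eta C1 C2 \<omega> \<and>
    (\<lambda>n. (1 / real n) * (\<Sum>i=1..n. indicator (AC lam b eta C1 C2) (xi X (- int i) \<omega>)))
      \<longlonglongrightarrow> rhoC M X lam b eta C1 C2 \<omega>"
  unfolding AE_all_countable
proof (intro allI)
  fix C1 C2 :: nat
  show "AE \<omega> in M. 1 \<le> C1 \<longrightarrow>
    (\<lambda>n. (1 / real n) * (\<Sum>i=0..n. indicator (AC lam b eta C1 C2) (xi X (int i) \<omega>)))
      \<longlonglongrightarrow> rhoC M X lam b eta C1 C2 \<omega> \<and>
    (\<lambda>n. (1 / real n) * (\<Sum>i=1..n. indicator (AC lam b eta C1 C2) (xi X (- int i) \<omega>)))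
      \<longlonglongrightarrow> rhoC M X lam b eta C1 C2 \<omega>"
    using AE_xi_averages[where X=X, OF M X st measurable_AC[OF lam b eta]]
    unfolding rhoC_def by (cases "1 \<le> C1") auto
qed

lemma AE_ex_rhoC_pos:
  fixes X :: "int \<Rightarrow> 'a \<Rightarrow> 'f::topological_space" and lam b :: "'f \<Rightarrow> real"
    and eta :: "real \<Rightarrow> 'f \<Rightarrow> real"
  assumes M: "prob_space M" and X: "\<And>t. X t \<in> M \<rightarrow>\<^sub>M borel" and st: "stationary M X"
    and lam_meas: "lam \<in> borel_measurable borel" and lam: "\<And>y. 0 \<le> lam y"
    and b_meas: "b \<in> borel_measurable borel" and b: "\<And>y. 0 \<le> b y"
    and b_log: "integrable M (\<lambda>\<omega>. logp (b (X 0 \<omega>)))"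
    and contr: "AE \<omega> in M. limsup (\<lambda>n. ereal (root n (\<Prod>i=1..n. lam (X (- int i) \<omega>)))) < 1"
    and eta_meas: "(\<lambda>(r, x). eta r x) \<in> borel_measurable (restrict_space borel {0<..} \<Otimes>\<^sub>M borel)"
    and eta_pos: "\<And>r x. 0 < r \<Longrightarrow> 0 < eta r x"
  shows "AE \<omega> in M. \<exists>C1\<ge>1. \<exists>C2\<ge>1. 0 < rhoC M X lam b eta C1 C2 \<omega>"
proof -
  interpret prob_space M by (rule M)
  have "AE \<omega> in M. \<forall>C1 C2. 1 \<le> C1 \<longrightarrow> xi X 0 \<omega> \<in> AC lam b eta C1 C2 \<longrightarrow> 0 < rhoC M X lam b eta C1 C2 \<omega>"
    unfolding AE_all_countable rhoC_def
    using AE_cond_prob_xi_pos[where X=X, OF M X measurable_AC[OF lam_meas b_meas eta_meas]]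
    by (intro allI) (auto elim: AE_mp)
  moreover note AE_xi_in_A1[where X=X, OF M X st lam b b_meas b_log contr]
  ultimately show ?thesis
  proof eventually_elim
    case (elim \<omega>)
    obtain C1 where C1: "1 \<le> C1" "xi X 0 \<omega> \<in> A1 lam b C1" using elim(2) by blast
    then obtain C2 where C2: "1 \<le> C2" "xi X 0 \<omega> \<in> A2 eta C1 C2"
      using ex_A2[of eta C1 "xi X 0 \<omega>"] eta_pos by force
    show ?case using elim(1) C1 C2 by (auto simp: AC_def)
  qed
qed

lemma prob_xi_in_A1_Union:
  fixes X :: "int \<Rightarrow> 'a \<Rightarrow> 'f::topological_space" and lam b :: "'f \<Rightarrow> real"
  assumes M: "prob_space M" and X: "\<And>t. X t \<in> M \<rightarrow>\<^sub>M borel" and st: "stationary M X"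
    and lam_meas: "lam \<in> borel_measurable borel" and lam: "\<And>y. 0 \<le> lam y"
    and b_meas: "b \<in> borel_measurable borel" and b: "\<And>y. 0 \<le> b y"
    and b_log: "integrable M (\<lambda>\<omega>. logp (b (X 0 \<omega>)))"
    and contr: "AE \<omega> in M. limsup (\<lambda>n. ereal (root n (\<Prod>i=1..n. lam (X (- int i) \<omega>)))) < 1"
  shows "measure M {\<omega> \<in> space M. xi X 0 \<omega> \<in> (\<Union>C1\<in>{1..}. A1 lam b C1)} = 1"
proof -
  interpret prob_space M by (rule M)
  have "{\<omega> \<in> space M. xi X 0 \<omega> \<in> (\<Union>C1\<in>{1..}. A1 lam b C1)} = {\<omega> \<in> space M. \<exists>C1\<ge>1. xi X 0 \<omega> \<in> A1 lam b C1}"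
    by auto
  also have "\<dots> \<in> sets M"
    using measurable_comp[OF measurable_xi[where X=X, OF X] measurable_A1[OF lam_meas b_meas]]
    by (simp add: comp_def)
  finally show ?thesis
    using AE_xi_in_A1[where X=X, OF M X st lam b b_meas b_log contr] by (subst prob_eq_1) auto
qed

theorem lemma1:
  fixes M :: "'a measure"
    and X :: "int \<Rightarrow> 'a \<Rightarrow> 'f::polish_space"
    and P :: "'f \<Rightarrow> 'e::polish_space \<Rightarrow> 'e measure"
    and V :: "'e \<Rightarrow> real"
    and lam b :: "'f \<Rightarrow> real"
    and eta :: "real \<Rightarrow> 'f \<Rightarrow> real"
  assumes M: "prob_space M"
    and X_meas: "\<And>t. X t \<in> measurable M borel"
    and P_prob: "\<And>x y. prob_space (P x y)"
    and P_sets: "\<And>x y. sets (P x y) = sets (borel :: 'e measure)"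
    and P_meas: "\<And>A. A \<in> sets (borel :: 'e measure) \<Longrightarrow>
        (\<lambda>(x, y). measure (P x y) A) \<in> borel_measurable (borel \<Otimes>\<^sub>M borel)"
    and A1: "stationary M X"
    and V_meas: "V \<in> borel_measurable borel" and V_pos: "\<And>y. V y > 0"
    and lam_meas: "lam \<in> borel_measurable borel" and lam_nonneg: "\<And>x. lam x \<ge> 0"
    and b_meas: "b \<in> borel_measurable borel" and b_nonneg: "\<And>x. b x \<ge> 0"
    and lam_log: "integrable M (\<lambda>\<omega>. logp (lam (X 0 \<omega>)))"
    and b_log: "integrable M (\<lambda>\<omega>. logp (b (X 0 \<omega>)))"
    and drift: "\<And>x y. (\<integral>\<^sup>+ z. ennreal (V z) \<partial>P x y) \<le> ennreal (lam x * V y + b x)"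
    and contr: "AE \<omega> in M.
        limsup (\<lambda>n. ereal (root n (\<Prod>i=1..n. lam (X (- int i) \<omega>)))) < 1"
    and eta_meas: "(\<lambda>(r, x). eta r x) \<in>
        borel_measurable (restrict_space borel {0<..} \<Otimes>\<^sub>M (borel :: 'f measure))"
    and eta_range: "\<And>r x. r > 0 \<Longrightarrow> 0 < eta r x \<and> eta r x < 1"
    and minor: "\<And>R. R > 0 \<Longrightarrow> \<exists>\<nu> :: 'f \<Rightarrow> 'e measure.
        (\<forall>x. prob_space (\<nu> x) \<and> sets (\<nu> x) = sets (borel :: 'e measure)) \<and>
        (\<forall>A \<in> sets (borel :: 'e measure). (\<lambda>x. measure (\<nu> x) A) \<in> borel_measurable borel) \<and>
        (\<forall>x y A. V y \<le> R \<longrightarrow> A \<in> sets (borel :: 'e measure) \<longrightarrow>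
            measure (P x y) A \<ge> eta R x * measure (\<nu> x) A)"
  shows "measure M {\<omega> \<in> space M. xi X 0 \<omega> \<in> (\<Union>C1\<in>{1..}. A1 lam b C1)} = 1 \<and>
      (\<exists>C1 C2 :: 'a \<Rightarrow> nat.
        C1 \<in> measurable M (count_space UNIV) \<and> C2 \<in> measurable M (count_space UNIV) \<and>
        (\<forall>\<omega> \<in> space M. C1 \<omega> \<ge> 1 \<and> C2 \<omega> \<ge> 1) \<and>
        (AE \<omega> in M.
           (\<lambda>n. (1 / real n) * (\<Sum>i=0..n.
               indicator (AC lam b eta (C1 \<omega>) (C2 \<omega>)) (xi X (int i) \<omega>)))
             \<longlonglongrightarrow> rhoC M X lam b eta (C1 \<omega>) (C2 \<omega>) \<omega> \<and>
           (\<lambda>n. (1 / real n) * (\<Sum>i=1..n.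
               indicator (AC lam b eta (C1 \<omega>) (C2 \<omega>)) (xi X (- int i) \<omega>)))
             \<longlonglongrightarrow> rhoC M X lam b eta (C1 \<omega>) (C2 \<omega>) \<omega> \<and>
           rhoC M X lam b eta (C1 \<omega>) (C2 \<omega>) \<omega> > 0))"
proof -
  have part1: "measure M {\<omega> \<in> space M. xi X 0 \<omega> \<in> (\<Union>C1\<in>{1..}. A1 lam b C1)} = 1"
    using prob_xi_in_A1_Union[where X=X, OF M X_meas A1 lam_meas lam_nonneg b_meas b_nonneg b_log contr] .
  have "rhoC M X lam b eta m n \<in> borel_measurable M" for m n
    unfolding rhoC_def by (rule borel_measurable_cond_exp2)
  then obtain C1 C2 :: "'a \<Rightarrow> nat"
    where C_meas: "C1 \<in> M \<rightarrow>\<^sub>M count_space UNIV" "C2 \<in> M \<rightarrow>\<^sub>M count_space UNIV"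
      and C_ge: "\<And>\<omega>. 1 \<le> C1 \<omega> \<and> 1 \<le> C2 \<omega>"
      and C_pos: "\<And>\<omega>. \<exists>m\<ge>1. \<exists>n\<ge>1. 0 < rhoC M X lam b eta m n \<omega> \<Longrightarrow>
        0 < rhoC M X lam b eta (C1 \<omega>) (C2 \<omega>) \<omega>"
    using measurable_select_positive_pair[where \<rho>="rhoC M X lam b eta"] by blast
  have "AE \<omega> in M. \<exists>C1\<ge>1. \<exists>C2\<ge>1. 0 < rhoC M X lam b eta C1 C2 \<omega>"
    by (rule AE_ex_rhoC_pos[where X=X])
      (use M X_meas A1 lam_meas lam_nonneg b_meas b_nonneg b_log contr eta_meas eta_range in auto)
  with AE_AC_averages[where X=X, OF M X_meas A1 lam_meas b_meas eta_meas]
  have "AE \<omega> in M.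
      (\<lambda>n. (1 / real n) * (\<Sum>i=0..n. indicator (AC lam b eta (C1 \<omega>) (C2 \<omega>)) (xi X (int i) \<omega>)))
        \<longlonglongrightarrow> rhoC M X lam b eta (C1 \<omega>) (C2 \<omega>) \<omega> \<and>
      (\<lambda>n. (1 / real n) * (\<Sum>i=1..n. indicator (AC lam b eta (C1 \<omega>) (C2 \<omega>)) (xi X (- int i) \<omega>)))
        \<longlonglongrightarrow> rhoC M X lam b eta (C1 \<omega>) (C2 \<omega>) \<omega> \<and>
      rhoC M X lam b eta (C1 \<omega>) (C2 \<omega>) \<omega> > 0"
    by eventually_elim (use C_ge C_pos in blast)
  with part1 C_meas C_ge show ?thesis by blast
qed

end
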